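(* Let $S\subset\mathbb{R}^d$ be finite, $\boldsymbol{U}$ an irreducible Markov generator on $S$ (not necessarily reversible), $R\in\mathbb{R}^S$, and $z\in\mathrm{rint\,conv}\,S$. For $Q\in\mathbb{R}^S$ let $\lambda(Q)$ be the principal eigenvalue of $\boldsymbol{U}+\mathrm{diag}(Q)$, and let \[ \Lambda(y):=\max_{\nu\in\mathsf{P}(S):\ \sum_i\nu_i i=y}\big[\langle\nu,R\rangle-I_{\boldsymbol{U}}(\nu)\big],\qquad y\in\mathrm{conv}\,S. \] Then \[ \Lambda(z)=\inf_{\beta\in\mathbb{R}^d}\big[\lambda(R+\beta\cdot\mathrm{id})-\beta\cdot z\big]=\lambda(R+\beta^z\cdot\mathrm{id})-\beta^z\cdot z=\langle\alpha^z,R\rangle-I_{\boldsymbol{U}}(\alpha^z). \] Here $\beta^z\in\mathbb{R}^d$ is the negative slope vector of any tangent plane to $\Lambda$ at $z$ (i.e. any $\beta$ with $\Lambda(y)\le\Lambda(z)-\beta\cdot(y-z)$ for all $y\in\mathrm{conv}\,S$; such $\beta$ exist), and $\alpha^z$ is the ancestral distribution corresponding to the reproduction rate $R+\beta^z\cdot\mathrm{id}$, which is the same for every such $\beta^z$. In particular, $\beta\mapsto\lambda(R+\beta\cdot\mathrm{id})$ is differentiable on $\mathbb{R}^d$ and $\nabla_\beta\lambda(R+\beta\cdot\mathrm{id})|_{\beta=\beta^z}=\langle\alpha^z,\mathrm{id}\rangle=z$.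
   Context: $\mathsf{P}(S)$ is the set of probability vectors on $S$, $\langle\nu,f\rangle=\sum_i\nu_if_i$, $I_{\boldsymbol{U}}(\nu):=\sup_{v\in(0,\infty)^S}[-\sum_i\nu_i(\boldsymbol{U}v)_i/v_i]$, and $\mathrm{rint\,conv}\,S=\{\sum_i\nu_i i:\nu\in\mathsf{P}(S),\nu_i>0\ \forall i\}$. $\mathrm{id}$ is the map $i\mapsto i$ on $S$, so $R+\beta\cdot\mathrm{id}$ is the vector $(R_i+\beta\cdot i)_{i\in S}$ and $\langle\alpha,\mathrm{id}\rangle=\sum_i\alpha_i i$. The ancestral distribution for a reproduction rate $Q$ is $\alpha_i=\pi_ih_i$, where $\pi,h$ are positive left and right eigenvectors of $\boldsymbol{U}+\mathrm{diag}(Q)$ for its principal eigenvalue, normalized by $\sum_i\pi_i=1=\sum_i\pi_ih_i$. *)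

theory Defs
  imports "HOL-Analysis.Analysis"
begin

text \<open>States are points of a finite set S of real^'d; vectors and matrices on S are
  functions on the whole type whose values outside S are irrelevant.\<close>

definition markov_generator :: "'a set \<Rightarrow> ('a \<Rightarrow> 'a \<Rightarrow> real) \<Rightarrow> bool" where
  "markov_generator S U \<longleftrightarrow>
     (\<forall>i\<in>S. \<forall>j\<in>S. i \<noteq> j \<longrightarrow> U i j \<ge> 0) \<and> (\<forall>i\<in>S. (\<Sum>j\<in>S. U i j) = 0)"

definition irreducible_gen :: "'a set \<Rightarrow> ('a \<Rightarrow> 'a \<Rightarrow> real) \<Rightarrow> bool" where
  "irreducible_gen S U \<longleftrightarrow>
     (\<forall>i\<in>S. \<forall>j\<in>S. (i, j) \<in> {(a, b). a \<in> S \<and> b \<in> S \<and> a \<noteq> b \<and> U a b > 0}\<^sup>*)"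

definition prob_vecs :: "'a set \<Rightarrow> ('a \<Rightarrow> real) set" where
  "prob_vecs S = {\<nu>. (\<forall>i\<in>S. \<nu> i \<ge> 0) \<and> (\<forall>i. i \<notin> S \<longrightarrow> \<nu> i = 0) \<and> sum \<nu> S = 1}"

definition rint_conv :: "('b::real_vector) set \<Rightarrow> 'b set" where
  "rint_conv S = {(\<Sum>i\<in>S. \<nu> i *\<^sub>R i) | \<nu>. \<nu> \<in> prob_vecs S \<and> (\<forall>i\<in>S. \<nu> i > 0)}"

definition rate_I :: "'a set \<Rightarrow> ('a \<Rightarrow> 'a \<Rightarrow> real) \<Rightarrow> ('a \<Rightarrow> real) \<Rightarrow> real" where
  "rate_I S U \<nu> = (SUP v \<in> {v. \<forall>i\<in>S. v i > 0}.
      - (\<Sum>i\<in>S. \<nu> i * (\<Sum>j\<in>S. U i j * v j) / v i))"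

definition plus_diag :: "('a \<Rightarrow> 'a \<Rightarrow> real) \<Rightarrow> ('a \<Rightarrow> real) \<Rightarrow> 'a \<Rightarrow> 'a \<Rightarrow> real" where
  "plus_diag U Q = (\<lambda>i j. U i j + (if i = j then Q i else 0))"

definition is_eigenvalue_on :: "'a set \<Rightarrow> ('a \<Rightarrow> 'a \<Rightarrow> real) \<Rightarrow> complex \<Rightarrow> bool" where
  "is_eigenvalue_on S M \<mu> \<longleftrightarrow> (\<exists>v :: 'a \<Rightarrow> complex. (\<exists>i\<in>S. v i \<noteq> 0) \<and>
      (\<forall>i\<in>S. (\<Sum>j\<in>S. complex_of_real (M i j) * v j) = \<mu> * v i))"

definition principal_eig :: "'a set \<Rightarrow> ('a \<Rightarrow> 'a \<Rightarrow> real) \<Rightarrow> real" where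
  "principal_eig S M = Max (Re ` {\<mu>. is_eigenvalue_on S M \<mu>})"

definition lam :: "'a set \<Rightarrow> ('a \<Rightarrow> 'a \<Rightarrow> real) \<Rightarrow> ('a \<Rightarrow> real) \<Rightarrow> real" where
  "lam S U Q = principal_eig S (plus_diag U Q)"

definition ancestral :: "'a set \<Rightarrow> ('a \<Rightarrow> 'a \<Rightarrow> real) \<Rightarrow> ('a \<Rightarrow> real) \<Rightarrow> ('a \<Rightarrow> real)" where
  "ancestral S U Q = (THE \<alpha>. \<exists>\<pi> h. (\<forall>i\<in>S. \<pi> i > 0 \<and> h i > 0) \<and>
      (\<forall>j\<in>S. (\<Sum>i\<in>S. \<pi> i * plus_diag U Q i j) = lam S U Q * \<pi> j) \<and>
      (\<forall>i\<in>S. (\<Sum>j\<in>S. plus_diag U Q i j * h j) = lam S U Q * h i) \<and>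
      sum \<pi> S = 1 \<and> (\<Sum>i\<in>S. \<pi> i * h i) = 1 \<and>
      \<alpha> = (\<lambda>i. if i \<in> S then \<pi> i * h i else 0))"

definition bigLambda :: "('b::real_vector) set \<Rightarrow> ('b \<Rightarrow> 'b \<Rightarrow> real) \<Rightarrow> ('b \<Rightarrow> real) \<Rightarrow> 'b \<Rightarrow> real" where
  "bigLambda S U R y = Sup {(\<Sum>i\<in>S. \<nu> i * R i) - rate_I S U \<nu> | \<nu>.
       \<nu> \<in> prob_vecs S \<and> (\<Sum>i\<in>S. \<nu> i *\<^sub>R i) = y}"

definition tangent_slope :: "('b::real_inner) set \<Rightarrow> ('b \<Rightarrow> 'b \<Rightarrow> real) \<Rightarrow> ('b \<Rightarrow> real) \<Rightarrow> 'b \<Rightarrow> 'b \<Rightarrow> bool" where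
  "tangent_slope S U R z \<beta> \<longleftrightarrow>
     (\<forall>y\<in>convex hull S. bigLambda S U R y \<le> bigLambda S U R z - \<beta> \<bullet> (y - z))"

end

theory Submission
  imports Defs "Jordan_Normal_Form.Char_Poly"
begin

(* For every Q the matrix U + diag Q is an irreducible Metzler matrix, so by Perron-Frobenius
   its principal eigenvalue lambda(Q) has positive left and right eigenvectors pi, h, and the
   Donsker-Varadhan formula lambda(Q) = max_nu [<nu, Q> - I_U(nu)] holds with the ancestral
   distribution alpha = pi h as the unique maximiser.  Hence F(beta) = lambda(R + beta . id)
   is convex with subgradient <alpha_beta, id>, which depends continuously on beta (uniqueness
   of the maximiser plus compactness), so F is differentiable with that gradient.
   Weak duality Lambda(y) <= F(beta) - beta . y is immediate.  For z in the relative interior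
   the dual function F(beta) - beta . z is coercive along the span of S - z and invariant
   orthogonally to it, so it has a minimiser, where the gradient <alpha_beta, id> equals z and
   weak duality becomes an equality.  Conversely a tangent plane to Lambda at z forces equality
   in weak duality; so its slope minimises the dual function, and its ancestral distribution is
   the unique maximiser of <nu, R + beta . id> - I_U(nu), which does not depend on the slope. *)

no_notation scalar_prod (infix "\<bullet>" 70)

section \<open>Perron--Frobenius theory of irreducible Metzler matrices\<close>

lemma finite_eigenvalues_on:
  assumes "finite S"
  shows "finite {\<mu>. is_eigenvalue_on S M \<mu>}"
proof -
  define n where "n = card S"
  obtain f where f: "bij_betw f {0..<n} S" using ex_bij_betw_nat_finite[OF assms] n_def by blast
  define A where "A = mat n n (\<lambda>(a, b). complex_of_real (M (f a) (f b)))"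
  have A: "A \<in> carrier_mat n n" unfolding A_def by simp
  have "{\<mu>. is_eigenvalue_on S M \<mu>} \<subseteq> {\<mu>. poly (char_poly A) \<mu> = 0}"
  proof
    fix \<mu> assume "\<mu> \<in> {\<mu>. is_eigenvalue_on S M \<mu>}"
    then obtain v where v0: "\<exists>i\<in>S. v i \<noteq> 0"
      and ev: "\<forall>i\<in>S. (\<Sum>j\<in>S. complex_of_real (M i j) * v j) = \<mu> * v i"
      unfolding is_eigenvalue_on_def by auto
    define w where "w = vec n (\<lambda>a. v (f a))"
    have wc: "w \<in> carrier_vec n" unfolding w_def by simp
    from v0 obtain a where a: "a < n" "v (f a) \<noteq> 0" using f unfolding bij_betw_def by auto
    have "w \<noteq> 0\<^sub>v n"
    proof
      assume "w = 0\<^sub>v n"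
      hence "w $ a = 0" using a by simp
      thus False using a unfolding w_def by simp
    qed
    moreover have "A *\<^sub>v w = \<mu> \<cdot>\<^sub>v w"
    proof (rule eq_vecI)
      fix b assume "b < dim_vec (\<mu> \<cdot>\<^sub>v w)"
      hence b: "b < n" unfolding w_def by simp
      have "(A *\<^sub>v w) $ b = (\<Sum>c\<in>{0..<n}. complex_of_real (M (f b) (f c)) * v (f c))"
        using b unfolding A_def w_def by (simp add: scalar_prod_def row_def)
      also have "\<dots> = (\<Sum>j\<in>S. complex_of_real (M (f b) j) * v j)"
        using sum.reindex_bij_betw[OF f, of "\<lambda>j. complex_of_real (M (f b) j) * v j"] by simp
      also have "\<dots> = \<mu> * v (f b)" using ev f b unfolding bij_betw_def by auto
      finally show "(A *\<^sub>v w) $ b = (\<mu> \<cdot>\<^sub>v w) $ b" using b unfolding w_def by simp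
    qed (simp add: A_def w_def)
    ultimately have "eigenvalue A \<mu>"
      unfolding eigenvalue_def eigenvector_def using A wc by blast
    thus "\<mu> \<in> {\<mu>. poly (char_poly A) \<mu> = 0}" using eigenvalue_root_char_poly[OF A] by simp
  qed
  moreover have "char_poly A \<noteq> 0" using degree_monic_char_poly[OF A] by auto
  ultimately show ?thesis using poly_roots_finite finite_subset by blast
qed

lemma finite_set_Bolzano_Weierstrass:
  fixes f :: "nat \<Rightarrow> 'a \<Rightarrow> real"
  assumes "finite S" and "\<And>n i. i \<in> S \<Longrightarrow> \<bar>f n i\<bar> \<le> B i"
  obtains r L where "strict_mono r" "\<forall>i\<in>S. (\<lambda>n. f (r n) i) \<longlonglongrightarrow> L i"
proof -
  from assms have "\<exists>r L. strict_mono r \<and> (\<forall>i\<in>S. (\<lambda>n. f (r n) i) \<longlonglongrightarrow> L i)"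
  proof (induction S rule: finite_induct)
    case empty
    show ?case by (rule exI[of _ id]) (auto simp: strict_mono_def)
  next
    case (insert x F)
    then obtain r L where r: "strict_mono r" and L: "\<forall>i\<in>F. (\<lambda>n. f (r n) i) \<longlonglongrightarrow> L i"
      by force
    have "bounded (range (\<lambda>n. f (r n) x))"
      unfolding bounded_iff using insert.prems by (intro exI[of _ "B x"]) auto
    then obtain l r' where r': "strict_mono r'" and l: "((\<lambda>n. f (r n) x) \<circ> r') \<longlonglongrightarrow> l"
      using bounded_imp_convergent_subsequence by blast
    have "(\<lambda>n. f ((r \<circ> r') n) i) \<longlonglongrightarrow> (L(x := l)) i" if "i \<in> insert x F" for i
    proof (cases "i = x")
      case True thus ?thesis using l by (simp add: o_def)
    next
      case False
      hence "((\<lambda>n. f (r n) i) \<circ> r') \<longlonglongrightarrow> L i"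
        using that L r' LIMSEQ_subseq_LIMSEQ by blast
      thus ?thesis using False by (simp add: o_def)
    qed
    moreover have "strict_mono (r \<circ> r')" using r r' by (simp add: strict_mono_o)
    ultimately show ?case by blast
  qed
  thus ?thesis using that by blast
qed

lemma plus_diag_row_sum:
  assumes "finite S" "i \<in> S"
  shows "(\<Sum>j\<in>S. plus_diag U Q i j * v j) = (\<Sum>j\<in>S. U i j * v j) + Q i * v i"
proof -
  have "(\<Sum>j\<in>S. plus_diag U Q i j * v j) = (\<Sum>j\<in>S. U i j * v j + (if i = j then Q i * v j else 0))"
    unfolding plus_diag_def by (rule sum.cong) (auto simp: algebra_simps)
  thus ?thesis using assms by (simp add: sum.distrib)
qed

definition support_graph :: "'a set \<Rightarrow> ('a \<Rightarrow> 'a \<Rightarrow> real) \<Rightarrow> ('a \<times> 'a) set" where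
  "support_graph S M = {(a, b). a \<in> S \<and> b \<in> S \<and> a \<noteq> b \<and> M a b > 0}"

lemma nonneg_matrix_apply_subinvariant:
  fixes A :: "'a \<Rightarrow> 'a \<Rightarrow> real"
  assumes "finite S" and A_nonneg: "\<And>i j. i \<in> S \<Longrightarrow> j \<in> S \<Longrightarrow> A i j \<ge> 0"
    and sub: "\<forall>j\<in>S. (\<Sum>k\<in>S. A j k * v k) \<le> r * v j" and i: "i \<in> S"
  shows "(\<Sum>j\<in>S. A i j * (\<Sum>k\<in>S. A j k * v k)) \<le> r * (\<Sum>j\<in>S. A i j * v j)"
    and "l \<in> S \<Longrightarrow> A i l > 0 \<Longrightarrow> (\<Sum>k\<in>S. A l k * v k) < r * v l \<Longrightarrow>
      (\<Sum>j\<in>S. A i j * (\<Sum>k\<in>S. A j k * v k)) < r * (\<Sum>j\<in>S. A i j * v j)"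
proof -
  have eq: "(\<Sum>j\<in>S. A i j * (r * v j)) = r * (\<Sum>j\<in>S. A i j * v j)"
    by (simp add: sum_distrib_left algebra_simps)
  have le: "\<forall>j\<in>S. A i j * (\<Sum>k\<in>S. A j k * v k) \<le> A i j * (r * v j)"
    using A_nonneg[OF i] sub by (auto intro: mult_left_mono)
  have "(\<Sum>j\<in>S. A i j * (\<Sum>k\<in>S. A j k * v k)) \<le> (\<Sum>j\<in>S. A i j * (r * v j))"
    by (rule sum_mono) (use le in blast)
  thus "(\<Sum>j\<in>S. A i j * (\<Sum>k\<in>S. A j k * v k)) \<le> r * (\<Sum>j\<in>S. A i j * v j)" using eq by simp
  assume l: "l \<in> S" "A i l > 0" "(\<Sum>k\<in>S. A l k * v k) < r * v l"
  hence "A i l * (\<Sum>k\<in>S. A l k * v k) < A i l * (r * v l)" by (intro mult_strict_left_mono)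
  hence "\<exists>j\<in>S. A i j * (\<Sum>k\<in>S. A j k * v k) < A i j * (r * v j)" using l(1) by blast
  thus "(\<Sum>j\<in>S. A i j * (\<Sum>k\<in>S. A j k * v k)) < r * (\<Sum>j\<in>S. A i j * v j)"
    using sum_strict_mono_ex1[OF \<open>finite S\<close> le] eq by simp
qed

locale irreducible_metzler =
  fixes S :: "'a set" and M :: "'a \<Rightarrow> 'a \<Rightarrow> real"
  assumes finite: "finite S" and nonempty: "S \<noteq> {}"
    and off_diag_nonneg: "\<And>i j. i \<in> S \<Longrightarrow> j \<in> S \<Longrightarrow> i \<noteq> j \<Longrightarrow> M i j \<ge> 0"
    and irreducible: "\<And>i j. i \<in> S \<Longrightarrow> j \<in> S \<Longrightarrow> (i, j) \<in> (support_graph S M)\<^sup>*"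
begin

lemma diag_mult_le_row_sum:
  assumes i: "i \<in> S" and v: "\<forall>j\<in>S. v j \<ge> 0"
  shows "M i i * v i \<le> (\<Sum>j\<in>S. M i j * v j)"
proof -
  have "0 \<le> M i j * v j" if "j \<in> S - {i}" for j
    using off_diag_nonneg[of i j] i v that by (auto intro: mult_nonneg_nonneg)
  hence "0 \<le> (\<Sum>j\<in>S - {i}. M i j * v j)" by (rule sum_nonneg)
  thus ?thesis using sum.remove[OF finite i, of "\<lambda>j. M i j * v j"] by simp
qed

lemma diag_le_subinvariant_rate:
  assumes "i \<in> S" "\<forall>j\<in>S. v j > 0" "\<forall>j\<in>S. (\<Sum>k\<in>S. M j k * v k) \<le> r * v j"
  shows "M i i \<le> r"
proof -
  have "\<forall>j\<in>S. v j \<ge> 0" using assms(2) by (simp add: less_imp_le)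
  hence "M i i * v i \<le> (\<Sum>k\<in>S. M i k * v k)" by (rule diag_mult_le_row_sum[OF assms(1)])
  also have "\<dots> \<le> r * v i" using assms(1,3) by blast
  finally have "M i i * v i \<le> r * v i" .
  thus ?thesis using mult_le_cancel_right_pos[of "v i" "M i i" r] assms by auto
qed

lemma nonneg_eigenvector_vanishes:
  assumes x0: "\<forall>i\<in>S. x i \<ge> 0" and ev: "\<forall>i\<in>S. (\<Sum>j\<in>S. M i j * x j) = \<mu> * x i"
    and k: "k \<in> S" "x k = 0" and j: "j \<in> S"
  shows "x j = 0"
proof -
  have propagate: "x b = 0" if ab: "(a, b) \<in> support_graph S M" and xa: "x a = 0" for a b
  proof -
    from ab have a: "a \<in> S" and b: "b \<in> S" and "a \<noteq> b" and Mab: "M a b > 0"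
      unfolding support_graph_def by auto
    have "(\<Sum>j\<in>S - {a}. M a j * x j) = 0"
      using ev a xa sum.remove[OF finite a, of "\<lambda>j. M a j * x j"] by simp
    moreover have "\<forall>j\<in>S - {a}. M a j * x j \<ge> 0"
      using off_diag_nonneg a x0 by (auto intro: mult_nonneg_nonneg)
    ultimately have "M a b * x b = 0"
      using sum_nonneg_eq_0_iff[of "S - {a}" "\<lambda>j. M a j * x j"] finite b \<open>a \<noteq> b\<close> by auto
    thus ?thesis using Mab by simp
  qed
  have "(k, j) \<in> (support_graph S M)\<^sup>*" using irreducible k j by auto
  thus ?thesis
  proof induction
    case base show ?case using k by simp
  next
    case (step a b) thus ?case using propagate by blast
  qed
qed

lemma support_graph_enters:
  assumes "T \<subseteq> S" "T \<noteq> {}" "T \<noteq> S"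
  obtains a b where "(a, b) \<in> support_graph S M" "a \<notin> T" "b \<in> T"
proof -
  obtain a0 b0 where a0: "a0 \<in> S" "a0 \<notin> T" and b0: "b0 \<in> T" using assms by auto
  have "(a0, b0) \<in> (support_graph S M)\<^sup>*" using irreducible a0 b0 assms by auto
  hence "\<exists>a b. (a, b) \<in> support_graph S M \<and> a \<notin> T \<and> b \<in> T" using b0
  proof induction
    case base thus ?case using a0 by simp
  next
    case (step y z) thus ?case by blast
  qed
  thus ?thesis using that by blast
qed

lemma subinvariant_ratio_bound:
  assumes "(i, j) \<in> (support_graph S M)\<^sup>*"
  obtains C where "C > 0"
    "\<And>v r. \<forall>l\<in>S. v l > 0 \<Longrightarrow> r \<le> rmax \<Longrightarrow> \<forall>l\<in>S. (\<Sum>k\<in>S. M l k * v k) \<le> r * v l \<Longrightarrow>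
       v j \<le> C * v i"
proof -
  from assms have "\<exists>C>0. \<forall>v r. (\<forall>l\<in>S. v l > 0) \<and> r \<le> rmax
      \<and> (\<forall>l\<in>S. (\<Sum>k\<in>S. M l k * v k) \<le> r * v l) \<longrightarrow> v j \<le> C * v i"
  proof (induction rule: rtrancl_induct)
    case base show ?case by (intro exI[of _ 1]) auto
  next
    case (step a b)
    then obtain C where C: "C > 0" and HC: "\<forall>v r. (\<forall>l\<in>S. v l > 0) \<and> r \<le> rmax
        \<and> (\<forall>l\<in>S. (\<Sum>k\<in>S. M l k * v k) \<le> r * v l) \<longrightarrow> v a \<le> C * v i"
      by blast
    from step(2) have a: "a \<in> S" and b: "b \<in> S" and "a \<noteq> b" and Mab: "M a b > 0"
      unfolding support_graph_def by auto
    define K where "K = max 1 ((rmax - M a a) / M a b)"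
    show ?case
    proof (intro exI[of _ "K * C"] conjI allI impI)
      show "K * C > 0" using C unfolding K_def by (simp add: zero_less_mult_iff)
      fix v r assume H: "(\<forall>l\<in>S. v l > 0) \<and> r \<le> rmax \<and> (\<forall>l\<in>S. (\<Sum>k\<in>S. M l k * v k) \<le> r * v l)"
      have "\<forall>k\<in>S - {a}. 0 \<le> M a k * v k"
        using off_diag_nonneg a H by (auto intro: mult_nonneg_nonneg simp: less_imp_le)
      hence "M a b * v b \<le> (\<Sum>k\<in>S - {a}. M a k * v k)"
        by (intro member_le_sum) (use finite b \<open>a \<noteq> b\<close> in auto)
      also have "\<dots> = (\<Sum>k\<in>S. M a k * v k) - M a a * v a"
        using sum.remove[OF finite a, of "\<lambda>k. M a k * v k"] by simp
      also have "\<dots> \<le> r * v a - M a a * v a" using H a by auto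
      also have "\<dots> \<le> (rmax - M a a) * v a" using H a by (simp add: algebra_simps mult_right_mono)
      finally have "v b \<le> ((rmax - M a a) / M a b) * v a" using Mab by (simp add: field_simps)
      also have "\<dots> \<le> K * v a" unfolding K_def using H a by (intro mult_right_mono) auto
      also have "\<dots> \<le> K * (C * v i)" using HC H unfolding K_def by (intro mult_left_mono) auto
      finally show "v b \<le> K * C * v i" by (simp add: mult.assoc)
    qed
  qed
  thus ?thesis using that by blast
qed

lemma subinvariant_normalized_bounds:
  assumes "i0 \<in> S" "j \<in> S"
  obtains C where "C > 0"
    "\<And>v r. \<forall>l\<in>S. v l > 0 \<Longrightarrow> r \<le> rmax \<Longrightarrow> \<forall>l\<in>S. (\<Sum>k\<in>S. M l k * v k) \<le> r * v l \<Longrightarrow>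
       v i0 = 1 \<Longrightarrow> v j \<le> C \<and> 1 \<le> C * v j"
proof -
  obtain C1 where C1: "C1 > 0" "\<And>v r. \<forall>l\<in>S. v l > 0 \<Longrightarrow> r \<le> rmax \<Longrightarrow>
      \<forall>l\<in>S. (\<Sum>k\<in>S. M l k * v k) \<le> r * v l \<Longrightarrow> v j \<le> C1 * v i0"
    using subinvariant_ratio_bound[OF irreducible[OF assms]] by blast
  obtain C2 where C2: "C2 > 0" "\<And>v r. \<forall>l\<in>S. v l > 0 \<Longrightarrow> r \<le> rmax \<Longrightarrow>
      \<forall>l\<in>S. (\<Sum>k\<in>S. M l k * v k) \<le> r * v l \<Longrightarrow> v i0 \<le> C2 * v j"
    using subinvariant_ratio_bound[OF irreducible[OF assms(2,1)]] by blast
  have "v j \<le> max C1 C2 \<and> 1 \<le> max C1 C2 * v j"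
    if "\<forall>l\<in>S. v l > 0" "r \<le> rmax" "\<forall>l\<in>S. (\<Sum>k\<in>S. M l k * v k) \<le> r * v l" "v i0 = 1" for v r
  proof -
    have "v j \<le> C1" "1 \<le> C2 * v j" using C1(2)[OF that(1-3)] C2(2)[OF that(1-3)] that(4) by auto
    moreover have "C2 * v j \<le> max C1 C2 * v j" using that(1) assms(2) by (intro mult_right_mono) auto
    ultimately show ?thesis by linarith
  qed
  moreover have "max C1 C2 > 0" using C1(1) by linarith
  ultimately show ?thesis using that by blast
qed

lemma subinvariant_scale:
  assumes "\<forall>i\<in>S. v i > 0" "\<forall>i\<in>S. (\<Sum>j\<in>S. M i j * v j) \<le> r * v i" "c > 0"
  shows "\<forall>i\<in>S. c * v i > 0" "\<forall>i\<in>S. (\<Sum>j\<in>S. M i j * (c * v j)) \<le> r * (c * v i)"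
proof -
  show "\<forall>i\<in>S. c * v i > 0" using assms by simp
  have "(\<Sum>j\<in>S. M i j * (c * v j)) = c * (\<Sum>j\<in>S. M i j * v j)" for i
    by (simp add: sum_distrib_left algebra_simps)
  thus "\<forall>i\<in>S. (\<Sum>j\<in>S. M i j * (c * v j)) \<le> r * (c * v i)"
    using assms mult_left_mono[of _ _ c] by (simp add: algebra_simps)
qed

lemma subinvariant_smoothing:
  assumes vpos: "\<forall>i\<in>S. v i > 0" and vsub: "\<forall>i\<in>S. (\<Sum>j\<in>S. M i j * v j) \<le> \<rho> * v i"
  obtains w where "\<forall>i\<in>S. w i > 0" "\<forall>i\<in>S. (\<Sum>j\<in>S. M i j * w j) \<le> \<rho> * w i"
    "\<And>i. i \<in> S \<Longrightarrow> (\<Sum>j\<in>S. M i j * v j) < \<rho> * v i \<Longrightarrow> (\<Sum>j\<in>S. M i j * w j) < \<rho> * w i"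
    "\<And>a b. (a, b) \<in> support_graph S M \<Longrightarrow> (\<Sum>j\<in>S. M b j * v j) < \<rho> * v b \<Longrightarrow>
       (\<Sum>j\<in>S. M a j * w j) < \<rho> * w a"
proof -
  define c where "c = 1 + (\<Sum>i\<in>S. \<bar>M i i\<bar>)"
  have diag_pos: "M i i + c > 0" if "i \<in> S" for i
  proof -
    have "\<bar>M i i\<bar> \<le> (\<Sum>i\<in>S. \<bar>M i i\<bar>)" by (rule member_le_sum) (use that finite in auto)
    thus ?thesis unfolding c_def by linarith
  qed
  \<comment> \<open>Smoothing by the nonnegative matrix \<open>M + c I\<close> spreads strictness along the edges.\<close>
  define A where "A = plus_diag M (\<lambda>_. c)"
  have A_nonneg: "A i j \<ge> 0" if "i \<in> S" "j \<in> S" for i j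
    unfolding A_def plus_diag_def using off_diag_nonneg[of i j] diag_pos[of i] that
    by (auto simp: less_imp_le)
  have A_apply: "(\<Sum>j\<in>S. A i j * x j) = (\<Sum>j\<in>S. M i j * x j) + c * x i" if "i \<in> S" for i x
    unfolding A_def by (rule plus_diag_row_sum[OF finite that])
  define w where "w = (\<lambda>i. \<Sum>j\<in>S. A i j * v j)"
  have Av_le: "\<forall>j\<in>S. (\<Sum>k\<in>S. A j k * v k) \<le> (\<rho> + c) * v j"
    using A_apply vsub by (simp add: algebra_simps)
  have Aw_le: "(\<Sum>j\<in>S. A i j * w j) \<le> (\<rho> + c) * w i" if "i \<in> S" for i
    unfolding w_def by (rule nonneg_matrix_apply_subinvariant(1)[OF finite A_nonneg Av_le that])
  have Av_less: "(\<Sum>k\<in>S. A j k * v k) < (\<rho> + c) * v j"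
    if "j \<in> S" "(\<Sum>k\<in>S. M j k * v k) < \<rho> * v j" for j
    using A_apply[OF that(1), of v] that(2) distrib_right[of \<rho> c "v j"] by linarith
  have Aw_less: "(\<Sum>j\<in>S. A i j * w j) < (\<rho> + c) * w i"
    if "i \<in> S" "j \<in> S" "A i j > 0" "(\<Sum>k\<in>S. M j k * v k) < \<rho> * v j" for i j
    unfolding w_def
    by (rule nonneg_matrix_apply_subinvariant(2)[OF finite A_nonneg Av_le that(1-3)
          Av_less[OF that(2,4)]])
  show ?thesis
  proof (rule that)
    show "\<forall>i\<in>S. w i > 0"
    proof
      fix i assume i: "i \<in> S"
      have "A i i * v i \<le> w i"
        unfolding w_def by (rule member_le_sum) (use A_nonneg i vpos finite in \<open>auto simp: less_imp_le\<close>)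
      moreover have "A i i * v i > 0" using diag_pos[OF i] vpos i unfolding A_def plus_diag_def by simp
      ultimately show "w i > 0" by simp
    qed
    show "\<forall>i\<in>S. (\<Sum>j\<in>S. M i j * w j) \<le> \<rho> * w i"
      using Aw_le A_apply by (simp add: algebra_simps)
    show "(\<Sum>j\<in>S. M i j * w j) < \<rho> * w i" if "i \<in> S" "(\<Sum>j\<in>S. M i j * v j) < \<rho> * v i" for i
      using Aw_less[of i i] A_apply[of i w] diag_pos[of i] that unfolding A_def plus_diag_def
      by (simp add: distrib_right)
    show "(\<Sum>j\<in>S. M a j * w j) < \<rho> * w a"
      if "(a, b) \<in> support_graph S M" "(\<Sum>j\<in>S. M b j * v j) < \<rho> * v b" for a b
      using Aw_less[of a b] A_apply[of a w] that unfolding A_def plus_diag_def support_graph_def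
      by (auto simp: distrib_right)
  qed
qed

lemma strictly_subinvariant_vector:
  assumes vpos: "\<forall>i\<in>S. v i > 0" and vsub: "\<forall>i\<in>S. (\<Sum>j\<in>S. M i j * v j) \<le> \<rho> * v i"
    and strict: "\<exists>i\<in>S. (\<Sum>j\<in>S. M i j * v j) \<noteq> \<rho> * v i"
  obtains w where "\<forall>i\<in>S. w i > 0" "\<forall>i\<in>S. (\<Sum>j\<in>S. M i j * w j) < \<rho> * w i"
proof -
  define T where "T = (\<lambda>v. {i\<in>S. (\<Sum>j\<in>S. M i j * v j) < \<rho> * v i})"
  have TS: "T v \<subseteq> S" for v unfolding T_def by auto
  have "\<exists>w. (\<forall>i\<in>S. w i > 0) \<and> (\<forall>i\<in>S. (\<Sum>j\<in>S. M i j * w j) \<le> \<rho> * w i)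
      \<and> (T w = S \<or> n < card (T w))" for n
  proof (induction n)
    case 0
    have "T v \<noteq> {}" using strict vsub unfolding T_def by force
    hence "0 < card (T v)" using finite_subset[OF TS finite] by (simp add: card_gt_0_iff)
    thus ?case using vpos vsub by blast
  next
    case (Suc n)
    then obtain u where upos: "\<forall>i\<in>S. u i > 0" and usub: "\<forall>i\<in>S. (\<Sum>j\<in>S. M i j * u j) \<le> \<rho> * u i"
      and ucard: "T u = S \<or> n < card (T u)" by blast
    show ?case
    proof (cases "T u = S")
      case True thus ?thesis using upos usub by blast
    next
      case False
      obtain w where wpos: "\<forall>i\<in>S. w i > 0" and wsub: "\<forall>i\<in>S. (\<Sum>j\<in>S. M i j * w j) \<le> \<rho> * w i"
        and keep: "\<And>i. i \<in> S \<Longrightarrow> (\<Sum>j\<in>S. M i j * u j) < \<rho> * u i \<Longrightarrow> (\<Sum>j\<in>S. M i j * w j) < \<rho> * w i"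
        and spread: "\<And>a b. (a, b) \<in> support_graph S M \<Longrightarrow> (\<Sum>j\<in>S. M b j * u j) < \<rho> * u b \<Longrightarrow>
          (\<Sum>j\<in>S. M a j * w j) < \<rho> * w a"
        using subinvariant_smoothing[OF upos usub] by blast
      have "T u \<noteq> {}" using ucard False by auto
      then obtain a b where ab: "(a, b) \<in> support_graph S M" "a \<notin> T u" "b \<in> T u"
        using support_graph_enters[OF TS _ False] by blast
      have "a \<in> T w" using spread[OF ab(1)] ab(1,3) unfolding T_def support_graph_def by auto
      moreover have "T u \<subseteq> T w" using keep unfolding T_def by auto
      ultimately have "T u \<subset> T w" using ab(2) by auto
      hence "card (T u) < card (T w)" using psubset_card_mono[OF finite_subset[OF TS finite]] by auto
      thus ?thesis using wpos wsub ucard False by auto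
    qed
  qed
  then obtain w where "\<forall>i\<in>S. w i > 0" and "T w = S \<or> card S < card (T w)" by blast
  moreover have "card (T w) \<le> card S" using TS finite by (intro card_mono)
  ultimately have "T w = S" by linarith
  hence "\<forall>i\<in>S. (\<Sum>j\<in>S. M i j * w j) < \<rho> * w i" unfolding T_def by blast
  thus ?thesis using that \<open>\<forall>i\<in>S. w i > 0\<close> by blast
qed

lemma subinvariant_limit:
  assumes i0: "i0 \<in> S"
    and pos: "\<And>n. \<forall>i\<in>S. v n i > 0" and sub: "\<And>n. \<forall>i\<in>S. (\<Sum>j\<in>S. M i j * v n j) \<le> r n * v n i"
    and normalized: "\<And>n. v n i0 = 1" and lim: "r \<longlonglongrightarrow> \<rho>" and bound: "\<And>n. r n \<le> rmax"
  obtains L where "\<forall>i\<in>S. L i > 0" "\<forall>i\<in>S. (\<Sum>j\<in>S. M i j * L j) \<le> \<rho> * L i"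
proof -
  have "\<exists>C. C > 0 \<and> (\<forall>n. v n j \<le> C \<and> 1 \<le> C * v n j)" if j: "j \<in> S" for j
  proof -
    obtain C where "C > 0" and C: "\<And>v r. \<forall>l\<in>S. v l > 0 \<Longrightarrow> r \<le> rmax \<Longrightarrow>
        \<forall>l\<in>S. (\<Sum>k\<in>S. M l k * v k) \<le> r * v l \<Longrightarrow> v i0 = 1 \<Longrightarrow> v j \<le> C \<and> 1 \<le> C * v j"
      using subinvariant_normalized_bounds[OF i0 j] by blast
    thus ?thesis using C[OF pos bound sub normalized] by blast
  qed
  then obtain C where C: "\<And>j. j \<in> S \<Longrightarrow> C j > 0 \<and> (\<forall>n. v n j \<le> C j \<and> 1 \<le> C j * v n j)"
    by metis
  have "\<bar>v n j\<bar> \<le> C j" if "j \<in> S" for n j using C[OF that] pos[of n] that by auto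
  then obtain s L where s: "strict_mono s" and L: "\<forall>i\<in>S. (\<lambda>n. v (s n) i) \<longlonglongrightarrow> L i"
    using finite_set_Bolzano_Weierstrass[OF finite] by blast
  have r_lim: "(\<lambda>n. r (s n)) \<longlonglongrightarrow> \<rho>" using LIMSEQ_subseq_LIMSEQ[OF lim s] by (simp add: o_def)
  show ?thesis
  proof (rule that)
    show "\<forall>j\<in>S. L j > 0"
    proof
      fix j assume j: "j \<in> S"
      have "1 / C j \<le> L j"
        by (rule LIMSEQ_le_const[OF L[rule_format, OF j]]) (use C[OF j] in \<open>auto simp: field_simps\<close>)
      moreover have "1 / C j > 0" using C[OF j] by simp
      ultimately show "L j > 0" by linarith
    qed
    show "\<forall>i\<in>S. (\<Sum>j\<in>S. M i j * L j) \<le> \<rho> * L i"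
    proof
      fix i assume i: "i \<in> S"
      show "(\<Sum>j\<in>S. M i j * L j) \<le> \<rho> * L i"
      proof (rule LIMSEQ_le)
        show "(\<lambda>n. \<Sum>j\<in>S. M i j * v (s n) j) \<longlonglongrightarrow> (\<Sum>j\<in>S. M i j * L j)"
          by (intro tendsto_intros) (use L in auto)
        show "(\<lambda>n. r (s n) * v (s n) i) \<longlonglongrightarrow> \<rho> * L i"
          by (intro tendsto_intros r_lim) (use L i in auto)
        show "\<exists>N. \<forall>n\<ge>N. (\<Sum>j\<in>S. M i j * v (s n) j) \<le> r (s n) * v (s n) i" using sub i by auto
      qed
    qed
  qed
qed

lemma subinvariant_at_infimum:
  obtains \<rho> v where "\<forall>i\<in>S. v i > 0" "\<forall>i\<in>S. (\<Sum>j\<in>S. M i j * v j) \<le> \<rho> * v i"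
    "\<And>r w. \<forall>i\<in>S. w i > 0 \<Longrightarrow> \<forall>i\<in>S. (\<Sum>j\<in>S. M i j * w j) \<le> r * w i \<Longrightarrow> \<rho> \<le> r"
proof -
  define rates where
    "rates = {r. \<exists>v. (\<forall>i\<in>S. v i > 0) \<and> (\<forall>i\<in>S. (\<Sum>j\<in>S. M i j * v j) \<le> r * v i)}"
  define \<rho> where "\<rho> = Inf rates"
  obtain i0 where i0: "i0 \<in> S" using nonempty by auto
  have bdd: "bdd_below rates"
    unfolding rates_def bdd_below_def using diag_le_subinvariant_rate[OF i0] by blast
  have "Max ((\<lambda>i. \<Sum>j\<in>S. M i j) ` S) \<in> rates"
    unfolding rates_def using finite by (intro CollectI exI[of _ "\<lambda>_. 1"]) simp
  hence rates_ne: "rates \<noteq> {}" by auto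
  have minimal: "\<rho> \<le> r"
    if "\<forall>i\<in>S. w i > 0" "\<forall>i\<in>S. (\<Sum>j\<in>S. M i j * w j) \<le> r * w i" for r w
    unfolding \<rho>_def by (rule cInf_lower[OF _ bdd]) (use that in \<open>auto simp: rates_def\<close>)
  have "\<exists>r v. (\<forall>i\<in>S. v i > 0) \<and> (\<forall>i\<in>S. (\<Sum>j\<in>S. M i j * v j) \<le> r * v i)
      \<and> r < \<rho> + inverse (real (Suc n))" for n
  proof -
    have "Inf rates < \<rho> + inverse (real (Suc n))" unfolding \<rho>_def by simp
    then obtain r where "r \<in> rates" "r < \<rho> + inverse (real (Suc n))"
      using cInf_less_iff[OF rates_ne bdd] by auto
    thus ?thesis unfolding rates_def by auto
  qed
  then obtain r v where vpos: "\<And>n. \<forall>i\<in>S. v n i > 0"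
    and vsub: "\<And>n. \<forall>i\<in>S. (\<Sum>j\<in>S. M i j * v n j) \<le> r n * v n i"
    and r_less: "\<And>n. r n < \<rho> + inverse (real (Suc n))"
    by metis
  have r_ge: "\<rho> \<le> r n" for n by (rule minimal[OF vpos vsub])
  define w where "w = (\<lambda>n i. inverse (v n i0) * v n i)"
  have "inverse (v n i0) > 0" for n using vpos[of n] i0 by auto
  hence wpos: "\<forall>i\<in>S. w n i > 0" and wsub: "\<forall>i\<in>S. (\<Sum>j\<in>S. M i j * w n j) \<le> r n * w n i" for n
    using subinvariant_scale[OF vpos vsub] unfolding w_def by blast+
  have w_normalized: "w n i0 = 1" for n using vpos[of n] i0 unfolding w_def by auto
  have r_lim: "r \<longlonglongrightarrow> \<rho>"
  proof (rule tendsto_sandwich[of "\<lambda>n. \<rho>" _ _ "\<lambda>n. \<rho> + inverse (real (Suc n))"])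
    show "\<forall>\<^sub>F n in sequentially. \<rho> \<le> r n" using r_ge by simp
    show "\<forall>\<^sub>F n in sequentially. r n \<le> \<rho> + inverse (real (Suc n))"
      using r_less by (simp add: less_imp_le)
    show "(\<lambda>n. \<rho> + inverse (real (Suc n))) \<longlonglongrightarrow> \<rho>"
      using tendsto_add[OF tendsto_const LIMSEQ_inverse_real_of_nat] by simp
  qed simp
  have r_bound: "r n \<le> \<rho> + 1" for n
    using r_less[of n] inverse_le_1_iff[of "real (Suc n)"] by linarith
  obtain L where L: "\<forall>i\<in>S. L i > 0" "\<forall>i\<in>S. (\<Sum>j\<in>S. M i j * L j) \<le> \<rho> * L i"
    using subinvariant_limit[OF i0 wpos wsub w_normalized r_lim r_bound] by blast
  show ?thesis by (rule that[OF L]) (use minimal in blast)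
qed

text \<open>The least subinvariance rate (Collatz--Wielandt) is an eigenvalue: otherwise smoothing
  would make the subinvariance strict everywhere and lower the rate.\<close>

lemma perron_eigenvector_exists:
  obtains \<rho> h where "\<forall>i\<in>S. h i > 0" "\<forall>i\<in>S. (\<Sum>j\<in>S. M i j * h j) = \<rho> * h i"
proof -
  obtain v \<rho> where vpos: "\<forall>i\<in>S. v i > 0" and vsub: "\<forall>i\<in>S. (\<Sum>j\<in>S. M i j * v j) \<le> \<rho> * v i"
    and minimal: "\<And>r w. \<forall>i\<in>S. w i > 0 \<Longrightarrow> \<forall>i\<in>S. (\<Sum>j\<in>S. M i j * w j) \<le> r * w i \<Longrightarrow> \<rho> \<le> r"
    by (rule subinvariant_at_infimum) blast
  show ?thesis
  proof (cases "\<forall>i\<in>S. (\<Sum>j\<in>S. M i j * v j) = \<rho> * v i")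
    case True thus ?thesis using that vpos by blast
  next
    case False
    then obtain w where wpos: "\<forall>i\<in>S. w i > 0" and wless: "\<forall>i\<in>S. (\<Sum>j\<in>S. M i j * w j) < \<rho> * w i"
      using strictly_subinvariant_vector[OF vpos vsub] by blast
    define r where "r = Max ((\<lambda>i. (\<Sum>j\<in>S. M i j * w j) / w i) ` S)"
    have "r < \<rho>"
      unfolding r_def using finite nonempty wpos wless by (auto simp: Max_less_iff divide_less_eq)
    moreover have "\<rho> \<le> r"
    proof (rule minimal[OF wpos], rule ballI)
      fix i assume i: "i \<in> S"
      have "(\<Sum>j\<in>S. M i j * w j) / w i \<le> r" unfolding r_def by (rule Max_ge) (use finite i in auto)
      thus "(\<Sum>j\<in>S. M i j * w j) \<le> r * w i" using wpos i by (simp add: divide_le_eq)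
    qed
    ultimately show ?thesis by simp
  qed
qed

lemma positive_eigenvector_unique:
  assumes hpos: "\<forall>i\<in>S. h i > 0" and heig: "\<forall>i\<in>S. (\<Sum>j\<in>S. M i j * h j) = \<mu> * h i"
    and x0: "\<forall>i\<in>S. x i \<ge> 0" and xeig: "\<forall>i\<in>S. (\<Sum>j\<in>S. M i j * x j) = \<mu> * x i"
  obtains c where "\<forall>i\<in>S. x i = c * h i"
proof -
  define c where "c = Min ((\<lambda>i. x i / h i) ` S)"
  have "c \<in> (\<lambda>i. x i / h i) ` S" unfolding c_def by (rule Min_in) (use finite nonempty in auto)
  then obtain k where k: "k \<in> S" "c = x k / h k" by auto
  have c_le: "c * h i \<le> x i" if "i \<in> S" for i
    using Min_le[of "(\<lambda>i. x i / h i) ` S" "x i / h i"] finite that hpos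
    unfolding c_def by (simp add: le_divide_eq)
  \<comment> \<open>\<open>x - c h\<close> is a nonnegative eigenvector vanishing at \<open>k\<close>.\<close>
  define y where "y = (\<lambda>i. x i - c * h i)"
  have "\<forall>i\<in>S. y i \<ge> 0" using c_le unfolding y_def by simp
  moreover have "\<forall>i\<in>S. (\<Sum>j\<in>S. M i j * y j) = \<mu> * y i"
  proof
    fix i assume i: "i \<in> S"
    have "(\<Sum>j\<in>S. M i j * y j) = (\<Sum>j\<in>S. M i j * x j) - c * (\<Sum>j\<in>S. M i j * h j)"
      unfolding y_def by (simp add: algebra_simps sum_subtractf sum_distrib_left)
    thus "(\<Sum>j\<in>S. M i j * y j) = \<mu> * y i" using xeig heig i unfolding y_def by (simp add: algebra_simps)
  qed
  moreover have "y k = 0" using k hpos unfolding y_def by auto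
  ultimately have "\<forall>i\<in>S. y i = 0" using nonneg_eigenvector_vanishes k(1) by blast
  thus ?thesis using that unfolding y_def by auto
qed

lemma left_right_eigenvalues_eq:
  assumes hpos: "\<forall>i\<in>S. h i > 0" and heig: "\<forall>i\<in>S. (\<Sum>j\<in>S. M i j * h j) = \<mu> * h i"
    and ppos: "\<forall>i\<in>S. p i > 0" and peig: "\<forall>j\<in>S. (\<Sum>i\<in>S. p i * M i j) = \<mu>' * p j"
  shows "\<mu> = \<mu>'"
proof -
  have "\<mu> * (\<Sum>i\<in>S. p i * h i) = (\<Sum>i\<in>S. p i * (\<Sum>j\<in>S. M i j * h j))"
    using heig by (simp add: sum_distrib_left algebra_simps)
  also have "\<dots> = (\<Sum>i\<in>S. \<Sum>j\<in>S. p i * M i j * h j)" by (simp add: sum_distrib_left mult.assoc)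
  also have "\<dots> = (\<Sum>j\<in>S. \<Sum>i\<in>S. p i * M i j * h j)" by (rule sum.swap)
  also have "\<dots> = (\<Sum>j\<in>S. (\<Sum>i\<in>S. p i * M i j) * h j)" by (simp add: sum_distrib_right)
  also have "\<dots> = \<mu>' * (\<Sum>i\<in>S. p i * h i)"
    using peig by (simp add: sum_distrib_left algebra_simps)
  finally show ?thesis using sum_pos[of S "\<lambda>i. p i * h i"] hpos ppos finite nonempty by simp
qed

lemma transpose: "irreducible_metzler S (\<lambda>i j. M j i)"
proof
  show "finite S" "S \<noteq> {}" using finite nonempty by auto
  show "\<And>i j. i \<in> S \<Longrightarrow> j \<in> S \<Longrightarrow> i \<noteq> j \<Longrightarrow> 0 \<le> M j i" using off_diag_nonneg by auto
  fix i j assume "i \<in> S" "j \<in> S"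
  have "support_graph S (\<lambda>i j. M j i) = (support_graph S M)\<inverse>" unfolding support_graph_def by auto
  thus "(i, j) \<in> (support_graph S (\<lambda>i j. M j i))\<^sup>*"
    using irreducible \<open>i \<in> S\<close> \<open>j \<in> S\<close> by (simp add: rtrancl_converse)
qed

end

definition perron_root :: "'a set \<Rightarrow> ('a \<Rightarrow> 'a \<Rightarrow> real) \<Rightarrow> real" where
  "perron_root S M = (SOME \<rho>. \<exists>h. (\<forall>i\<in>S. h i > 0) \<and> (\<forall>i\<in>S. (\<Sum>j\<in>S. M i j * h j) = \<rho> * h i))"

context irreducible_metzler
begin

lemma perron_right_eigenvector:
  obtains h where "\<forall>i\<in>S. h i > 0" "\<forall>i\<in>S. (\<Sum>j\<in>S. M i j * h j) = perron_root S M * h i"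
proof -
  have "\<exists>\<rho> h. (\<forall>i\<in>S. h i > 0) \<and> (\<forall>i\<in>S. (\<Sum>j\<in>S. M i j * h j) = \<rho> * h i)"
    using perron_eigenvector_exists by metis
  from someI_ex[OF this] show ?thesis using that unfolding perron_root_def by blast
qed

lemma perron_root_unique:
  assumes "\<forall>i\<in>S. h i > 0" "\<forall>i\<in>S. (\<Sum>j\<in>S. M i j * h j) = \<mu> * h i"
  shows "\<mu> = perron_root S M"
proof -
  interpret T: irreducible_metzler S "\<lambda>i j. M j i" by (rule transpose)
  obtain \<mu>' p where p: "\<forall>i\<in>S. p i > 0" "\<forall>i\<in>S. (\<Sum>j\<in>S. M j i * p j) = \<mu>' * p i"
    by (rule T.perron_eigenvector_exists)
  have peig: "\<forall>j\<in>S. (\<Sum>i\<in>S. p i * M i j) = \<mu>' * p j" using p(2) by (simp add: mult.commute)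
  obtain h' where h': "\<forall>i\<in>S. h' i > 0" "\<forall>i\<in>S. (\<Sum>j\<in>S. M i j * h' j) = perron_root S M * h' i"
    by (rule perron_right_eigenvector)
  show ?thesis
    using left_right_eigenvalues_eq[OF assms p(1) peig] left_right_eigenvalues_eq[OF h' p(1) peig]
    by simp
qed

lemma perron_left_eigenvector:
  obtains p where "\<forall>i\<in>S. p i > 0" "\<forall>j\<in>S. (\<Sum>i\<in>S. p i * M i j) = perron_root S M * p j"
proof -
  interpret T: irreducible_metzler S "\<lambda>i j. M j i" by (rule transpose)
  obtain \<mu> p where p: "\<forall>i\<in>S. p i > 0" "\<forall>i\<in>S. (\<Sum>j\<in>S. M j i * p j) = \<mu> * p i"
    by (rule T.perron_eigenvector_exists)
  have peig: "\<forall>j\<in>S. (\<Sum>i\<in>S. p i * M i j) = \<mu> * p j" using p(2) by (simp add: mult.commute)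
  obtain h where "\<forall>i\<in>S. h i > 0" "\<forall>i\<in>S. (\<Sum>j\<in>S. M i j * h j) = perron_root S M * h i"
    by (rule perron_right_eigenvector)
  hence "perron_root S M = \<mu>" using left_right_eigenvalues_eq p(1) peig by blast
  thus ?thesis using that p(1) peig by blast
qed

lemma positive_left_eigenvector_unique:
  assumes ppos: "\<forall>i\<in>S. p i > 0" and peig: "\<forall>j\<in>S. (\<Sum>i\<in>S. p i * M i j) = \<mu> * p j"
    and x0: "\<forall>i\<in>S. x i \<ge> 0" and xeig: "\<forall>j\<in>S. (\<Sum>i\<in>S. x i * M i j) = \<mu> * x j"
  obtains c where "\<forall>i\<in>S. x i = c * p i"
proof -
  interpret T: irreducible_metzler S "\<lambda>i j. M j i" by (rule transpose)
  show ?thesis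
    by (rule T.positive_eigenvector_unique[OF ppos _ x0, of \<mu>], insert peig xeig that)
      (auto simp: mult.commute)
qed

lemma normalized_perron_vectors_exist:
  obtains p h where "\<forall>i\<in>S. p i > 0" "\<forall>i\<in>S. h i > 0"
    "\<forall>j\<in>S. (\<Sum>i\<in>S. p i * M i j) = perron_root S M * p j"
    "\<forall>i\<in>S. (\<Sum>j\<in>S. M i j * h j) = perron_root S M * h i"
    "sum p S = 1" "(\<Sum>i\<in>S. p i * h i) = 1"
proof -
  obtain p0 where p0: "\<forall>i\<in>S. p0 i > 0" "\<forall>j\<in>S. (\<Sum>i\<in>S. p0 i * M i j) = perron_root S M * p0 j"
    by (rule perron_left_eigenvector)
  obtain h0 where h0: "\<forall>i\<in>S. h0 i > 0" "\<forall>i\<in>S. (\<Sum>j\<in>S. M i j * h0 j) = perron_root S M * h0 i"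
    by (rule perron_right_eigenvector)
  define p where "p = (\<lambda>i. p0 i / sum p0 S)"
  define h where "h = (\<lambda>i. h0 i / (\<Sum>i\<in>S. p i * h0 i))"
  have "sum p0 S > 0" using p0 finite nonempty by (intro sum_pos) auto
  hence ppos: "\<forall>i\<in>S. p i > 0" and "sum p S = 1" and
    "\<forall>j\<in>S. (\<Sum>i\<in>S. p i * M i j) = perron_root S M * p j"
    using p0 unfolding p_def by (simp_all add: sum_divide_distrib[symmetric])
  moreover have "(\<Sum>i\<in>S. p i * h0 i) > 0" using ppos h0 finite nonempty by (intro sum_pos) auto
  hence "\<forall>i\<in>S. h i > 0" and "(\<Sum>i\<in>S. p i * h i) = 1"
    and "\<forall>i\<in>S. (\<Sum>j\<in>S. M i j * h j) = perron_root S M * h i"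
    using h0 unfolding h_def by (simp_all add: sum_divide_distrib[symmetric])
  ultimately show ?thesis using that by blast
qed

lemma normalized_perron_vectors_unique:
  assumes "\<forall>i\<in>S. p i > 0" "\<forall>i\<in>S. h i > 0"
    "\<forall>j\<in>S. (\<Sum>i\<in>S. p i * M i j) = \<mu> * p j" "\<forall>i\<in>S. (\<Sum>j\<in>S. M i j * h j) = \<mu> * h i"
    "sum p S = 1" "(\<Sum>i\<in>S. p i * h i) = 1"
  assumes "\<forall>i\<in>S. p' i > 0" "\<forall>i\<in>S. h' i > 0"
    "\<forall>j\<in>S. (\<Sum>i\<in>S. p' i * M i j) = \<mu> * p' j" "\<forall>i\<in>S. (\<Sum>j\<in>S. M i j * h' j) = \<mu> * h' i"
    "sum p' S = 1" "(\<Sum>i\<in>S. p' i * h' i) = 1"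
  shows "\<forall>i\<in>S. p' i = p i \<and> h' i = h i"
proof -
  obtain c where c: "\<forall>i\<in>S. p' i = c * p i"
    by (rule positive_left_eigenvector_unique[OF assms(1,3) _ assms(9)])
      (use assms(7) in \<open>auto simp: less_imp_le\<close>)
  have "c = 1" using assms(5,11) c by (simp add: sum_distrib_left[symmetric])
  obtain d where d: "\<forall>i\<in>S. h' i = d * h i"
    by (rule positive_eigenvector_unique[OF assms(2,4) _ assms(10)])
      (use assms(8) in \<open>auto simp: less_imp_le\<close>)
  have "(\<Sum>i\<in>S. p' i * h' i) = d * (\<Sum>i\<in>S. p i * h i)"
    using c d \<open>c = 1\<close> by (simp add: sum_distrib_left algebra_simps)
  hence "d = 1" using assms(6,12) by simp
  thus ?thesis using c d \<open>c = 1\<close> by simp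
qed

lemma diag_le_perron_root: "i \<in> S \<Longrightarrow> M i i \<le> perron_root S M"
  by (rule perron_right_eigenvector) (auto intro: diag_le_subinvariant_rate)

lemma eigenvalue_Re_le_perron_root:
  assumes "is_eigenvalue_on S M \<mu>"
  shows "Re \<mu> \<le> perron_root S M"
proof -
  obtain v where v0: "\<exists>i\<in>S. v i \<noteq> 0"
    and ev: "\<forall>i\<in>S. (\<Sum>j\<in>S. complex_of_real (M i j) * v j) = \<mu> * v i"
    using assms unfolding is_eigenvalue_on_def by auto
  obtain h where hpos: "\<forall>i\<in>S. h i > 0" and heig: "\<forall>i\<in>S. (\<Sum>j\<in>S. M i j * h j) = perron_root S M * h i"
    by (rule perron_right_eigenvector)
  define \<rho> where "\<rho> = perron_root S M"
  \<comment> \<open>Compare \<open>|v|\<close> with \<open>h\<close> at a coordinate where \<open>|v i| / h i\<close> is maximal.\<close>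
  define c where "c = Max ((\<lambda>i. cmod (v i) / h i) ` S)"
  have "c \<in> (\<lambda>i. cmod (v i) / h i) ` S" unfolding c_def by (rule Max_in) (use finite nonempty in auto)
  then obtain k where k: "k \<in> S" "c = cmod (v k) / h k" by auto
  have ratio_le: "cmod (v i) / h i \<le> c" if "i \<in> S" for i
    unfolding c_def by (rule Max_ge) (use finite that in auto)
  have bound: "cmod (v i) \<le> c * h i" if "i \<in> S" for i
    using ratio_le[OF that] hpos that by (simp add: divide_le_eq)
  from v0 obtain i1 where i1: "i1 \<in> S" "v i1 \<noteq> 0" by auto
  have "0 < cmod (v i1) / h i1" using i1 hpos by auto
  hence "c > 0" using ratio_le[OF i1(1)] by linarith
  have vk: "cmod (v k) = c * h k" using k hpos by auto
  hence vk_pos: "cmod (v k) > 0" using \<open>c > 0\<close> hpos k by auto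
  have "(\<mu> - complex_of_real (M k k)) * v k = (\<Sum>j\<in>S - {k}. complex_of_real (M k j) * v j)"
    using ev k sum.remove[OF finite k(1), of "\<lambda>j. complex_of_real (M k j) * v j"]
    by (simp add: algebra_simps)
  hence "cmod (\<mu> - complex_of_real (M k k)) * cmod (v k)
      = cmod (\<Sum>j\<in>S - {k}. complex_of_real (M k j) * v j)"
    by (metis norm_mult)
  also have "\<dots> \<le> (\<Sum>j\<in>S - {k}. cmod (complex_of_real (M k j) * v j))" by (rule norm_sum)
  also have "\<dots> = (\<Sum>j\<in>S - {k}. M k j * cmod (v j))"
    by (rule sum.cong) (use off_diag_nonneg k in \<open>auto simp: norm_mult\<close>)
  also have "\<dots> \<le> (\<Sum>j\<in>S - {k}. M k j * (c * h j))"
  proof (rule sum_mono)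
    fix j assume j: "j \<in> S - {k}"
    show "M k j * cmod (v j) \<le> M k j * (c * h j)"
      using off_diag_nonneg[of k j] k(1) j bound[of j] by (auto intro: mult_left_mono)
  qed
  also have "\<dots> = c * ((\<Sum>j\<in>S. M k j * h j) - M k k * h k)"
    using sum.remove[OF finite k(1), of "\<lambda>j. M k j * h j"]
    by (simp add: sum_distrib_left algebra_simps)
  also have "\<dots> = (\<rho> - M k k) * cmod (v k)" using heig k vk unfolding \<rho>_def by (simp add: algebra_simps)
  finally have "cmod (\<mu> - complex_of_real (M k k)) \<le> \<rho> - M k k" using vk_pos by simp
  moreover have "Re \<mu> - M k k \<le> cmod (\<mu> - complex_of_real (M k k))"
    using complex_Re_le_cmod[of "\<mu> - complex_of_real (M k k)"] by simp
  ultimately show ?thesis unfolding \<rho>_def by simp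
qed

lemma principal_eig_eq_perron_root: "principal_eig S M = perron_root S M"
  unfolding principal_eig_def
proof (rule Max_eqI)
  show "finite (Re ` {\<mu>. is_eigenvalue_on S M \<mu>})" using finite_eigenvalues_on[OF finite] by simp
  show "\<And>y. y \<in> Re ` {\<mu>. is_eigenvalue_on S M \<mu>} \<Longrightarrow> y \<le> perron_root S M"
    using eigenvalue_Re_le_perron_root by auto
  obtain h where hpos: "\<forall>i\<in>S. h i > 0" and heig: "\<forall>i\<in>S. (\<Sum>j\<in>S. M i j * h j) = perron_root S M * h i"
    by (rule perron_right_eigenvector)
  have "is_eigenvalue_on S M (complex_of_real (perron_root S M))"
    unfolding is_eigenvalue_on_def
  proof (intro exI[of _ "\<lambda>i. complex_of_real (h i)"] conjI ballI)
    show "\<exists>i\<in>S. complex_of_real (h i) \<noteq> 0" using hpos nonempty by force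
    fix i assume "i \<in> S"
    have "(\<Sum>j\<in>S. complex_of_real (M i j) * complex_of_real (h j))
        = complex_of_real (\<Sum>j\<in>S. M i j * h j)" by simp
    thus "(\<Sum>j\<in>S. complex_of_real (M i j) * complex_of_real (h j))
        = complex_of_real (perron_root S M) * complex_of_real (h i)"
      using heig \<open>i \<in> S\<close> by simp
  qed
  thus "perron_root S M \<in> Re ` {\<mu>. is_eigenvalue_on S M \<mu>}" by force
qed

end

section \<open>The Donsker--Varadhan variational formula\<close>

lemma tendsto_0_if_mult_nonneg:
  fixes f :: "real \<Rightarrow> real"
  assumes lim: "(f \<longlongrightarrow> l) (at 0)" and "\<delta> > 0"
    and sign: "\<And>t. 0 < \<bar>t\<bar> \<Longrightarrow> \<bar>t\<bar> < \<delta> \<Longrightarrow> 0 \<le> t * f t"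
  shows "l = 0"
proof -
  have "l \<ge> 0"
  proof (rule tendsto_lowerbound[OF filterlim_at_split[THEN iffD1, OF lim, THEN conjunct2]])
    show "\<forall>\<^sub>F t in at_right 0. 0 \<le> f t"
      unfolding eventually_at_right_field
    proof (intro exI[of _ \<delta>] conjI allI impI)
      fix t :: real assume "0 < t" "t < \<delta>"
      thus "0 \<le> f t" using sign[of t] by (simp add: zero_le_mult_iff)
    qed (rule \<open>\<delta> > 0\<close>)
  qed simp
  moreover have "l \<le> 0"
  proof (rule tendsto_upperbound[OF filterlim_at_split[THEN iffD1, OF lim, THEN conjunct1]])
    show "\<forall>\<^sub>F t in at_left 0. f t \<le> 0"
      unfolding eventually_at_left_field
    proof (intro exI[of _ "- \<delta>"] conjI allI impI)
      fix t :: real assume "- \<delta> < t" "t < 0"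
      thus "f t \<le> 0" using sign[of t] by (simp add: zero_le_mult_iff)
    qed (use \<open>\<delta> > 0\<close> in simp)
  qed simp
  ultimately show ?thesis by simp
qed

lemma balanced_flow_sum_diff_eq_0:
  fixes c :: "'a \<Rightarrow> 'a \<Rightarrow> real"
  assumes "\<And>j. j \<in> S \<Longrightarrow> (\<Sum>i\<in>S. c i j) = (\<Sum>i\<in>S. c j i)"
  shows "(\<Sum>i\<in>S. \<Sum>j\<in>S. c i j * (f j - f i)) = 0"
proof -
  have "(\<Sum>i\<in>S. \<Sum>j\<in>S. c i j * f j) = (\<Sum>j\<in>S. (\<Sum>i\<in>S. c i j) * f j)"
    by (subst sum.swap) (simp add: sum_distrib_right)
  also have "\<dots> = (\<Sum>j\<in>S. (\<Sum>i\<in>S. c j i) * f j)" using assms by simp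
  also have "\<dots> = (\<Sum>i\<in>S. \<Sum>j\<in>S. c i j * f i)" by (simp add: sum_distrib_right)
  finally show ?thesis by (simp add: right_diff_distrib sum_subtractf)
qed

lemma balanced_flow_le_ratio_sum:
  fixes c :: "'a \<Rightarrow> 'a \<Rightarrow> real"
  assumes balanced: "\<And>j. j \<in> S \<Longrightarrow> (\<Sum>i\<in>S. c i j) = (\<Sum>i\<in>S. c j i)"
    and off_diag: "\<And>i j. i \<in> S \<Longrightarrow> j \<in> S \<Longrightarrow> i \<noteq> j \<Longrightarrow> c i j \<ge> 0"
    and wpos: "\<forall>i\<in>S. w i > 0"
  shows "(\<Sum>i\<in>S. \<Sum>j\<in>S. c i j) \<le> (\<Sum>i\<in>S. \<Sum>j\<in>S. c i j * (w j / w i))"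
proof -
  \<comment> \<open>\<open>ln x \<le> x - 1\<close> termwise; the diagonal terms vanish.\<close>
  have "0 = (\<Sum>i\<in>S. \<Sum>j\<in>S. c i j * (ln (w j) - ln (w i)))"
    using balanced_flow_sum_diff_eq_0[where f = "\<lambda>i. ln (w i)", OF balanced] by simp
  also have "\<dots> \<le> (\<Sum>i\<in>S. \<Sum>j\<in>S. c i j * (w j / w i - 1))"
  proof (intro sum_mono)
    fix i j assume i: "i \<in> S" and j: "j \<in> S"
    have "w i > 0" "w j > 0" using wpos i j by auto
    show "c i j * (ln (w j) - ln (w i)) \<le> c i j * (w j / w i - 1)"
    proof (cases "i = j")
      case True thus ?thesis using \<open>w j > 0\<close> by simp
    next
      case False
      have "ln (w j) - ln (w i) \<le> w j / w i - 1"
        using ln_le_minus_one[of "w j / w i"] \<open>w i > 0\<close> \<open>w j > 0\<close> by (simp add: ln_div)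
      thus ?thesis using off_diag[OF i j False] by (rule mult_left_mono)
    qed
  qed
  also have "\<dots> = (\<Sum>i\<in>S. \<Sum>j\<in>S. c i j * (w j / w i)) - (\<Sum>i\<in>S. \<Sum>j\<in>S. c i j)"
    by (simp add: right_diff_distrib sum_subtractf)
  finally show ?thesis by simp
qed

context irreducible_metzler
begin

lemma perron_root_le_weighted_ratio:
  assumes ppos: "\<forall>i\<in>S. p i > 0" and peig: "\<forall>j\<in>S. (\<Sum>i\<in>S. p i * M i j) = \<rho> * p j"
    and hpos: "\<forall>i\<in>S. h i > 0" and heig: "\<forall>i\<in>S. (\<Sum>j\<in>S. M i j * h j) = \<rho> * h i"
    and vpos: "\<forall>i\<in>S. v i > 0"
  shows "\<rho> * (\<Sum>i\<in>S. p i * h i) \<le> (\<Sum>i\<in>S. p i * h i * (\<Sum>j\<in>S. M i j * v j) / v i)"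
proof -
  define w where "w = (\<lambda>i. v i / h i)"
  define c where "c = (\<lambda>i j. p i * M i j * h j)"
  have row: "(\<Sum>j\<in>S. c i j) = \<rho> * p i * h i" if "i \<in> S" for i
  proof -
    have "(\<Sum>j\<in>S. c i j) = p i * (\<Sum>j\<in>S. M i j * h j)"
      unfolding c_def by (simp add: sum_distrib_left mult.assoc)
    thus ?thesis using heig that by simp
  qed
  have col: "(\<Sum>i\<in>S. c i j) = \<rho> * p j * h j" if "j \<in> S" for j
  proof -
    have "(\<Sum>i\<in>S. c i j) = (\<Sum>i\<in>S. p i * M i j) * h j" unfolding c_def by (simp add: sum_distrib_right)
    thus ?thesis using peig that by simp
  qed
  have "\<rho> * (\<Sum>i\<in>S. p i * h i) = (\<Sum>i\<in>S. \<Sum>j\<in>S. c i j)"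
    using row by (simp add: sum_distrib_left mult.assoc)
  also have "\<dots> \<le> (\<Sum>i\<in>S. \<Sum>j\<in>S. c i j * (w j / w i))"
  proof (rule balanced_flow_le_ratio_sum)
    show "\<And>j. j \<in> S \<Longrightarrow> (\<Sum>i\<in>S. c i j) = (\<Sum>i\<in>S. c j i)" using row col by simp
    show "\<And>i j. i \<in> S \<Longrightarrow> j \<in> S \<Longrightarrow> i \<noteq> j \<Longrightarrow> 0 \<le> c i j"
      unfolding c_def using off_diag_nonneg ppos hpos by (auto intro!: mult_nonneg_nonneg simp: less_imp_le)
    show "\<forall>i\<in>S. w i > 0" using vpos hpos unfolding w_def by auto
  qed
  also have "\<dots> = (\<Sum>i\<in>S. p i * h i * (\<Sum>j\<in>S. M i j * v j) / v i)"
  proof (rule sum.cong[OF refl])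
    fix i assume i: "i \<in> S"
    have "p i * h i * (\<Sum>j\<in>S. M i j * v j) / v i = (\<Sum>j\<in>S. p i * h i * (M i j * v j) / v i)"
      by (simp add: sum_distrib_left sum_divide_distrib)
    also have "\<dots> = (\<Sum>j\<in>S. c i j * (w j / w i))"
      by (rule sum.cong[OF refl]) (use hpos vpos i in \<open>auto simp: c_def w_def field_simps\<close>)
    finally show "(\<Sum>j\<in>S. c i j * (w j / w i)) = p i * h i * (\<Sum>j\<in>S. M i j * v j) / v i" ..
  qed
  finally show ?thesis .
qed

text \<open>The lower bound is attained at \<open>v = h\<close>, so perturbing one coordinate of \<open>h\<close> has no
  first-order effect; this says that \<open>\<nu> / h\<close> is a left eigenvector.\<close>

lemma weighted_ratio_first_variation:
  assumes hpos: "\<forall>i\<in>S. h i > 0" and heig: "\<forall>i\<in>S. (\<Sum>j\<in>S. M i j * h j) = \<rho> * h i"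
    and \<nu>1: "sum \<nu> S = 1"
    and lower: "\<And>v. \<forall>i\<in>S. v i > 0 \<Longrightarrow> \<rho> \<le> (\<Sum>i\<in>S. \<nu> i * (\<Sum>j\<in>S. M i j * v j) / v i)"
    and k: "k \<in> S"
  shows "(\<Sum>i\<in>S. \<nu> i / h i * M i k) = \<rho> * (\<nu> k / h k)"
proof -
  define A where "A = (\<Sum>i\<in>S - {k}. \<nu> i * M i k / h i)"
  define B where "B = \<nu> k * (M k k - \<rho>)"
  have hk: "h k > 0" using hpos k by auto
  have variation: "0 \<le> t * (A + B / (h k + t))" if t: "\<bar>t\<bar> < h k" for t
  proof -
    define v where "v = (\<lambda>j. h j + (if j = k then t else 0))"
    have vpos: "\<forall>i\<in>S. v i > 0" using hpos t unfolding v_def by auto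
    have Mv: "(\<Sum>j\<in>S. M i j * v j) = \<rho> * h i + M i k * t" if "i \<in> S" for i
    proof -
      have "(\<Sum>j\<in>S. M i j * v j) = (\<Sum>j\<in>S. M i j * h j + (if j = k then M i j * t else 0))"
        unfolding v_def by (rule sum.cong) (auto simp: algebra_simps)
      thus ?thesis using heig that finite k by (simp add: sum.distrib)
    qed
    have "(\<Sum>i\<in>S. \<nu> i * (\<Sum>j\<in>S. M i j * v j) / v i)
        = \<nu> k * (\<rho> * h k + M k k * t) / (h k + t) + (\<Sum>i\<in>S - {k}. \<nu> i * (\<rho> * h i + M i k * t) / h i)"
      using sum.remove[OF finite k, of "\<lambda>i. \<nu> i * (\<Sum>j\<in>S. M i j * v j) / v i"] Mv k
      by (simp add: v_def)
    also have "(\<Sum>i\<in>S - {k}. \<nu> i * (\<rho> * h i + M i k * t) / h i)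
        = (\<Sum>i\<in>S - {k}. \<rho> * \<nu> i + t * (\<nu> i * M i k / h i))"
      by (rule sum.cong[OF refl]) (use hpos in \<open>auto simp: field_simps\<close>)
    also have "\<dots> = \<rho> * (\<Sum>i\<in>S - {k}. \<nu> i) + t * A"
      unfolding A_def by (simp add: sum.distrib sum_distrib_left)
    also have "\<nu> k * (\<rho> * h k + M k k * t) / (h k + t) = \<rho> * \<nu> k + t * (B / (h k + t))"
      using t unfolding B_def by (simp add: field_simps)
    also have "\<rho> * \<nu> k + t * (B / (h k + t)) + (\<rho> * (\<Sum>i\<in>S - {k}. \<nu> i) + t * A)
        = \<rho> * (\<nu> k + (\<Sum>i\<in>S - {k}. \<nu> i)) + t * (A + B / (h k + t))"
      by (simp add: algebra_simps)
    also have "\<nu> k + (\<Sum>i\<in>S - {k}. \<nu> i) = 1" using sum.remove[OF finite k, of \<nu>] \<nu>1 by simp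
    finally show ?thesis using lower[OF vpos] by simp
  qed
  have "((\<lambda>t. A + B / (h k + t)) \<longlongrightarrow> A + B / (h k + 0)) (at 0)"
    by (intro tendsto_intros) (use hk in auto)
  hence "A + B / h k = 0"
    using tendsto_0_if_mult_nonneg[of _ _ "h k"] variation hk by simp
  moreover have "(\<Sum>i\<in>S. \<nu> i / h i * M i k) = \<nu> k / h k * M k k + A"
    using sum.remove[OF finite k, of "\<lambda>i. \<nu> i / h i * M i k"] unfolding A_def by simp
  moreover have "B / h k = \<nu> k / h k * M k k - \<rho> * (\<nu> k / h k)"
    unfolding B_def by (simp add: algebra_simps diff_divide_distrib)
  ultimately show ?thesis by simp
qed

lemma weighted_ratio_minimizer_unique:
  assumes ppos: "\<forall>i\<in>S. p i > 0" and peig: "\<forall>j\<in>S. (\<Sum>i\<in>S. p i * M i j) = \<rho> * p j"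
    and hpos: "\<forall>i\<in>S. h i > 0" and heig: "\<forall>i\<in>S. (\<Sum>j\<in>S. M i j * h j) = \<rho> * h i"
    and \<nu>0: "\<forall>i\<in>S. \<nu> i \<ge> 0" and \<nu>1: "sum \<nu> S = 1"
    and lower: "\<And>v. \<forall>i\<in>S. v i > 0 \<Longrightarrow> \<rho> \<le> (\<Sum>i\<in>S. \<nu> i * (\<Sum>j\<in>S. M i j * v j) / v i)"
  obtains c where "\<forall>i\<in>S. \<nu> i = c * (p i * h i)"
proof -
  have "\<forall>i\<in>S. \<nu> i / h i \<ge> 0" using \<nu>0 hpos by (simp add: less_imp_le)
  moreover have "\<forall>j\<in>S. (\<Sum>i\<in>S. \<nu> i / h i * M i j) = \<rho> * (\<nu> j / h j)"
    using weighted_ratio_first_variation[OF hpos heig \<nu>1 lower] by simp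
  ultimately obtain c where c: "\<forall>i\<in>S. \<nu> i / h i = c * p i"
    by (rule positive_left_eigenvector_unique[OF ppos peig])
  have "\<forall>i\<in>S. \<nu> i = c * (p i * h i)"
  proof
    fix i assume "i \<in> S"
    hence "\<nu> i / h i = c * p i" "h i > 0" using c hpos by auto
    thus "\<nu> i = c * (p i * h i)" by (simp add: field_simps)
  qed
  thus ?thesis by (rule that)
qed

end

lemma plus_diag_weighted_ratio:
  assumes "finite S" "\<forall>i\<in>S. v i > 0"
  shows "(\<Sum>i\<in>S. \<nu> i * (\<Sum>j\<in>S. plus_diag U Q i j * v j) / v i)
       = (\<Sum>i\<in>S. \<nu> i * (\<Sum>j\<in>S. U i j * v j) / v i) + (\<Sum>i\<in>S. \<nu> i * Q i)"
proof -
  have "\<nu> i * (\<Sum>j\<in>S. plus_diag U Q i j * v j) / v i = \<nu> i * (\<Sum>j\<in>S. U i j * v j) / v i + \<nu> i * Q i"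
    if "i \<in> S" for i
  proof -
    have "v i \<noteq> 0" using assms(2) that by auto
    hence "\<nu> i * (a + Q i * v i) / v i = \<nu> i * a / v i + \<nu> i * Q i" for a by (simp add: field_simps)
    thus ?thesis using plus_diag_row_sum[OF assms(1) that] by simp
  qed
  thus ?thesis by (simp add: sum.distrib)
qed

lemma weighted_ratio_bdd_above:
  assumes "finite S" "markov_generator S U" "\<nu> \<in> prob_vecs S"
  shows "bdd_above ((\<lambda>v. - (\<Sum>i\<in>S. \<nu> i * (\<Sum>j\<in>S. U i j * v j) / v i)) ` {v. \<forall>i\<in>S. v i > 0})"
proof (rule bdd_aboveI2)
  fix v :: "'a \<Rightarrow> real" assume "v \<in> {v. \<forall>i\<in>S. v i > 0}"
  hence vpos: "\<forall>i\<in>S. v i > 0" by auto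
  have "\<nu> i * U i i \<le> \<nu> i * (\<Sum>j\<in>S. U i j * v j) / v i" if i: "i \<in> S" for i
  proof -
    have "0 \<le> U i j * v j" if "j \<in> S - {i}" for j
      using assms(2) vpos i that unfolding markov_generator_def by (auto intro: mult_nonneg_nonneg less_imp_le)
    hence "0 \<le> (\<Sum>j\<in>S - {i}. U i j * v j)" by (rule sum_nonneg)
    hence "U i i * v i \<le> (\<Sum>j\<in>S. U i j * v j)"
      using sum.remove[OF assms(1) i, of "\<lambda>j. U i j * v j"] by simp
    hence "U i i \<le> (\<Sum>j\<in>S. U i j * v j) / v i" using vpos i by (simp add: le_divide_eq)
    moreover have "\<nu> i \<ge> 0" using assms(3) i unfolding prob_vecs_def by auto
    ultimately show ?thesis using mult_left_mono by fastforce
  qed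
  hence "(\<Sum>i\<in>S. \<nu> i * U i i) \<le> (\<Sum>i\<in>S. \<nu> i * (\<Sum>j\<in>S. U i j * v j) / v i)" by (rule sum_mono)
  thus "- (\<Sum>i\<in>S. \<nu> i * (\<Sum>j\<in>S. U i j * v j) / v i) \<le> - (\<Sum>i\<in>S. \<nu> i * U i i)" by simp
qed

lemma weighted_ratio_le_rate_I:
  assumes "finite S" "markov_generator S U" "\<nu> \<in> prob_vecs S" "\<forall>i\<in>S. v i > 0"
  shows "- (\<Sum>i\<in>S. \<nu> i * (\<Sum>j\<in>S. U i j * v j) / v i) \<le> rate_I S U \<nu>"
  unfolding rate_I_def using assms(4) by (intro cSUP_upper weighted_ratio_bdd_above[OF assms(1-3)]) simp

lemma rate_I_le:
  assumes "\<And>v. \<forall>i\<in>S. v i > 0 \<Longrightarrow> - (\<Sum>i\<in>S. \<nu> i * (\<Sum>j\<in>S. U i j * v j) / v i) \<le> C"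
  shows "rate_I S U \<nu> \<le> C"
  unfolding rate_I_def
proof (rule cSUP_least)
  show "{v. \<forall>i\<in>S. v i > (0::real)} \<noteq> {}" by (auto intro: exI[of _ "\<lambda>_. 1"])
qed (use assms in auto)

lemma rate_I_nonneg:
  assumes "finite S" "markov_generator S U" "\<nu> \<in> prob_vecs S"
  shows "rate_I S U \<nu> \<ge> 0"
  using weighted_ratio_le_rate_I[OF assms, of "\<lambda>_. 1"] assms(2)
  unfolding markov_generator_def by simp

locale irreducible_generator =
  fixes S :: "'a set" and U :: "'a \<Rightarrow> 'a \<Rightarrow> real"
  assumes finite: "finite S" and nonempty: "S \<noteq> {}"
    and generator: "markov_generator S U" and irreducible: "irreducible_gen S U"
begin

lemma irreducible_metzler_plus_diag: "irreducible_metzler S (plus_diag U Q)"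
proof
  show "finite S" "S \<noteq> {}" using finite nonempty by auto
  show "\<And>i j. i \<in> S \<Longrightarrow> j \<in> S \<Longrightarrow> i \<noteq> j \<Longrightarrow> 0 \<le> plus_diag U Q i j"
    using generator unfolding markov_generator_def plus_diag_def by auto
  have "support_graph S (plus_diag U Q) = {(a, b). a \<in> S \<and> b \<in> S \<and> a \<noteq> b \<and> U a b > 0}"
    unfolding support_graph_def plus_diag_def by auto
  thus "\<And>i j. i \<in> S \<Longrightarrow> j \<in> S \<Longrightarrow> (i, j) \<in> (support_graph S (plus_diag U Q))\<^sup>*"
    using irreducible unfolding irreducible_gen_def by auto
qed

lemma lam_eq_perron_root: "lam S U Q = perron_root S (plus_diag U Q)"
  unfolding lam_def by (rule irreducible_metzler.principal_eig_eq_perron_root[OF irreducible_metzler_plus_diag])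

lemma lam_add_const:
  assumes "\<forall>i\<in>S. Q' i = Q i + c"
  shows "lam S U Q' = lam S U Q + c"
proof -
  interpret irreducible_metzler S "plus_diag U Q" by (rule irreducible_metzler_plus_diag)
  interpret Q': irreducible_metzler S "plus_diag U Q'" by (rule irreducible_metzler_plus_diag)
  obtain h where hpos: "\<forall>i\<in>S. h i > 0"
    and heig: "\<forall>i\<in>S. (\<Sum>j\<in>S. plus_diag U Q i j * h j) = lam S U Q * h i"
    by (rule perron_right_eigenvector[folded lam_eq_perron_root])
  have "\<forall>i\<in>S. (\<Sum>j\<in>S. plus_diag U Q' i j * h j) = (lam S U Q + c) * h i"
    using heig assms plus_diag_row_sum[OF finite] by (simp add: algebra_simps)
  hence "lam S U Q + c = perron_root S (plus_diag U Q')" by (rule Q'.perron_root_unique[OF hpos])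
  thus ?thesis by (simp add: lam_eq_perron_root)
qed

lemma ancestral_eq:
  obtains p h where "\<forall>i\<in>S. p i > 0" "\<forall>i\<in>S. h i > 0"
    "\<forall>j\<in>S. (\<Sum>i\<in>S. p i * plus_diag U Q i j) = lam S U Q * p j"
    "\<forall>i\<in>S. (\<Sum>j\<in>S. plus_diag U Q i j * h j) = lam S U Q * h i"
    "sum p S = 1" "(\<Sum>i\<in>S. p i * h i) = 1"
    "ancestral S U Q = (\<lambda>i. if i \<in> S then p i * h i else 0)"
proof -
  interpret irreducible_metzler S "plus_diag U Q" by (rule irreducible_metzler_plus_diag)
  obtain p h where ph: "\<forall>i\<in>S. p i > 0" "\<forall>i\<in>S. h i > 0"
    "\<forall>j\<in>S. (\<Sum>i\<in>S. p i * plus_diag U Q i j) = lam S U Q * p j"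
    "\<forall>i\<in>S. (\<Sum>j\<in>S. plus_diag U Q i j * h j) = lam S U Q * h i"
    "sum p S = 1" "(\<Sum>i\<in>S. p i * h i) = 1"
    by (rule normalized_perron_vectors_exist[folded lam_eq_perron_root])
  have "ancestral S U Q = (\<lambda>i. if i \<in> S then p i * h i else 0)"
    unfolding ancestral_def
  proof (rule the_equality)
    show "\<exists>\<pi> h'. (\<forall>i\<in>S. \<pi> i > 0 \<and> h' i > 0) \<and>
      (\<forall>j\<in>S. (\<Sum>i\<in>S. \<pi> i * plus_diag U Q i j) = lam S U Q * \<pi> j) \<and>
      (\<forall>i\<in>S. (\<Sum>j\<in>S. plus_diag U Q i j * h' j) = lam S U Q * h' i) \<and>
      sum \<pi> S = 1 \<and> (\<Sum>i\<in>S. \<pi> i * h' i) = 1 \<and>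
      (\<lambda>i. if i \<in> S then p i * h i else 0) = (\<lambda>i. if i \<in> S then \<pi> i * h' i else 0)"
      by (intro exI[of _ p] exI[of _ h]) (use ph in simp)
    fix \<alpha> assume "\<exists>\<pi> h'. (\<forall>i\<in>S. \<pi> i > 0 \<and> h' i > 0) \<and>
      (\<forall>j\<in>S. (\<Sum>i\<in>S. \<pi> i * plus_diag U Q i j) = lam S U Q * \<pi> j) \<and>
      (\<forall>i\<in>S. (\<Sum>j\<in>S. plus_diag U Q i j * h' j) = lam S U Q * h' i) \<and>
      sum \<pi> S = 1 \<and> (\<Sum>i\<in>S. \<pi> i * h' i) = 1 \<and>
      \<alpha> = (\<lambda>i. if i \<in> S then \<pi> i * h' i else 0)"
    then obtain \<pi> h' where "\<forall>i\<in>S. \<pi> i > 0" "\<forall>i\<in>S. h' i > 0"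
      "\<forall>j\<in>S. (\<Sum>i\<in>S. \<pi> i * plus_diag U Q i j) = lam S U Q * \<pi> j"
      "\<forall>i\<in>S. (\<Sum>j\<in>S. plus_diag U Q i j * h' j) = lam S U Q * h' i"
      "sum \<pi> S = 1" "(\<Sum>i\<in>S. \<pi> i * h' i) = 1" and \<alpha>: "\<alpha> = (\<lambda>i. if i \<in> S then \<pi> i * h' i else 0)"
      by blast
    thus "\<alpha> = (\<lambda>i. if i \<in> S then p i * h i else 0)"
      using normalized_perron_vectors_unique[OF ph] by auto
  qed
  thus ?thesis using that ph by blast
qed

lemma DV_le_lam:
  assumes \<nu>: "\<nu> \<in> prob_vecs S"
  shows "(\<Sum>i\<in>S. \<nu> i * Q i) - rate_I S U \<nu> \<le> lam S U Q"
proof -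
  interpret irreducible_metzler S "plus_diag U Q" by (rule irreducible_metzler_plus_diag)
  obtain h where hpos: "\<forall>i\<in>S. h i > 0"
    and heig: "\<forall>i\<in>S. (\<Sum>j\<in>S. plus_diag U Q i j * h j) = lam S U Q * h i"
    by (rule perron_right_eigenvector[folded lam_eq_perron_root])
  have "(\<Sum>i\<in>S. \<nu> i * (\<Sum>j\<in>S. plus_diag U Q i j * h j) / h i) = (\<Sum>i\<in>S. \<nu> i * lam S U Q)"
    by (rule sum.cong) (use hpos heig in auto)
  also have "\<dots> = lam S U Q" using \<nu> unfolding prob_vecs_def by (simp flip: sum_distrib_right)
  finally have "(\<Sum>i\<in>S. \<nu> i * (\<Sum>j\<in>S. U i j * h j) / h i) + (\<Sum>i\<in>S. \<nu> i * Q i) = lam S U Q"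
    using plus_diag_weighted_ratio[OF finite hpos] by simp
  thus ?thesis using weighted_ratio_le_rate_I[OF finite generator \<nu> hpos] by simp
qed

lemma ancestral_in_prob_vecs: "ancestral S U Q \<in> prob_vecs S"
proof -
  obtain p h where "\<forall>i\<in>S. p i > 0" "\<forall>i\<in>S. h i > 0" "(\<Sum>i\<in>S. p i * h i) = 1"
    and \<alpha>: "ancestral S U Q = (\<lambda>i. if i \<in> S then p i * h i else 0)"
    by (rule ancestral_eq)
  thus ?thesis unfolding prob_vecs_def \<alpha> by (auto intro: mult_nonneg_nonneg less_imp_le)
qed

lemma DV_ancestral_eq_lam:
  "(\<Sum>i\<in>S. ancestral S U Q i * Q i) - rate_I S U (ancestral S U Q) = lam S U Q"
proof -
  interpret irreducible_metzler S "plus_diag U Q" by (rule irreducible_metzler_plus_diag)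
  obtain p h where ppos: "\<forall>i\<in>S. p i > 0" and hpos: "\<forall>i\<in>S. h i > 0"
    and peig: "\<forall>j\<in>S. (\<Sum>i\<in>S. p i * plus_diag U Q i j) = lam S U Q * p j"
    and heig: "\<forall>i\<in>S. (\<Sum>j\<in>S. plus_diag U Q i j * h j) = lam S U Q * h i"
    and ph: "(\<Sum>i\<in>S. p i * h i) = 1"
    and \<alpha>: "ancestral S U Q = (\<lambda>i. if i \<in> S then p i * h i else 0)"
    by (rule ancestral_eq)
  have "rate_I S U (ancestral S U Q) \<le> (\<Sum>i\<in>S. ancestral S U Q i * Q i) - lam S U Q"
  proof (rule rate_I_le)
    fix v :: "'a \<Rightarrow> real" assume vpos: "\<forall>i\<in>S. v i > 0"
    have "lam S U Q \<le> (\<Sum>i\<in>S. p i * h i * (\<Sum>j\<in>S. plus_diag U Q i j * v j) / v i)"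
      using perron_root_le_weighted_ratio[OF ppos peig hpos heig vpos] ph by simp
    also have "\<dots> = (\<Sum>i\<in>S. ancestral S U Q i * (\<Sum>j\<in>S. plus_diag U Q i j * v j) / v i)"
      unfolding \<alpha> by (rule sum.cong) auto
    also have "\<dots> = (\<Sum>i\<in>S. ancestral S U Q i * (\<Sum>j\<in>S. U i j * v j) / v i)
        + (\<Sum>i\<in>S. ancestral S U Q i * Q i)"
      by (rule plus_diag_weighted_ratio[OF finite vpos])
    finally show "- (\<Sum>i\<in>S. ancestral S U Q i * (\<Sum>j\<in>S. U i j * v j) / v i)
        \<le> (\<Sum>i\<in>S. ancestral S U Q i * Q i) - lam S U Q"
      by simp
  qed
  thus ?thesis using DV_le_lam[OF ancestral_in_prob_vecs, of Q Q] by simp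
qed

lemma DV_maximizer_eq_ancestral:
  assumes \<nu>: "\<nu> \<in> prob_vecs S" and max: "lam S U Q \<le> (\<Sum>i\<in>S. \<nu> i * Q i) - rate_I S U \<nu>"
  shows "\<nu> = ancestral S U Q"
proof -
  interpret irreducible_metzler S "plus_diag U Q" by (rule irreducible_metzler_plus_diag)
  obtain p h where ppos: "\<forall>i\<in>S. p i > 0" and hpos: "\<forall>i\<in>S. h i > 0"
    and peig: "\<forall>j\<in>S. (\<Sum>i\<in>S. p i * plus_diag U Q i j) = lam S U Q * p j"
    and heig: "\<forall>i\<in>S. (\<Sum>j\<in>S. plus_diag U Q i j * h j) = lam S U Q * h i"
    and ph: "(\<Sum>i\<in>S. p i * h i) = 1"
    and \<alpha>: "ancestral S U Q = (\<lambda>i. if i \<in> S then p i * h i else 0)"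
    by (rule ancestral_eq)
  have \<nu>0: "\<forall>i\<in>S. \<nu> i \<ge> 0" and \<nu>1: "sum \<nu> S = 1" and \<nu>_out: "\<forall>i. i \<notin> S \<longrightarrow> \<nu> i = 0"
    using \<nu> unfolding prob_vecs_def by auto
  have "lam S U Q \<le> (\<Sum>i\<in>S. \<nu> i * (\<Sum>j\<in>S. plus_diag U Q i j * v j) / v i)"
    if vpos: "\<forall>i\<in>S. v i > 0" for v
    using max weighted_ratio_le_rate_I[OF finite generator \<nu> vpos]
      plus_diag_weighted_ratio[OF finite vpos, of \<nu>] by simp
  then obtain c where c: "\<forall>i\<in>S. \<nu> i = c * (p i * h i)"
    using weighted_ratio_minimizer_unique[OF ppos peig hpos heig \<nu>0 \<nu>1] by blast
  have "sum \<nu> S = c * (\<Sum>i\<in>S. p i * h i)" using c by (simp add: sum_distrib_left)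
  hence "c = 1" using \<nu>1 ph by simp
  thus ?thesis unfolding \<alpha> using c \<nu>_out by auto
qed

end

section \<open>The tilted principal eigenvalue\<close>

lemma prob_vecs_bounds:
  assumes "finite S" "\<nu> \<in> prob_vecs S" "i \<in> S"
  shows "0 \<le> \<nu> i" "\<nu> i \<le> 1"
proof -
  show "0 \<le> \<nu> i" using assms unfolding prob_vecs_def by auto
  have "\<nu> i \<le> sum \<nu> S" by (rule member_le_sum) (use assms in \<open>auto simp: prob_vecs_def\<close>)
  thus "\<nu> i \<le> 1" using assms unfolding prob_vecs_def by auto
qed

locale tilted_generator = irreducible_generator S U
  for S :: "'v::euclidean_space set" and U +
  fixes R :: "'v \<Rightarrow> real"
begin

text \<open>\<open>tilt_lam \<beta>\<close> is the paper's \<open>\<lambda>(R + \<beta> \<bullet> id)\<close>, and \<open>tilt_mean \<beta>\<close> is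
  \<open>\<langle>\<alpha>, id\<rangle>\<close> for the corresponding ancestral distribution \<open>\<alpha>\<close>.\<close>

abbreviation "tilt_lam \<beta> \<equiv> lam S U (\<lambda>i. R i + \<beta> \<bullet> i)"
abbreviation "tilt_anc \<beta> \<equiv> ancestral S U (\<lambda>i. R i + \<beta> \<bullet> i)"
abbreviation "tilt_mean \<beta> \<equiv> (\<Sum>i\<in>S. tilt_anc \<beta> i *\<^sub>R i)"

lemma sum_tilted_rate:
  "(\<Sum>i\<in>S. \<nu> i * (R i + \<beta> \<bullet> i)) = (\<Sum>i\<in>S. \<nu> i * R i) + \<beta> \<bullet> (\<Sum>i\<in>S. \<nu> i *\<^sub>R i)"
  by (simp add: inner_sum_right distrib_left sum.distrib)

lemma DV_tilt_anc_eq_tilt_lam: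
  "(\<Sum>i\<in>S. tilt_anc \<beta> i * R i) + \<beta> \<bullet> tilt_mean \<beta> - rate_I S U (tilt_anc \<beta>) = tilt_lam \<beta>"
  using DV_ancestral_eq_lam[of "\<lambda>i. R i + \<beta> \<bullet> i"] sum_tilted_rate[of "tilt_anc \<beta>" \<beta>] by simp

lemma DV_le_tilt_lam:
  "\<nu> \<in> prob_vecs S \<Longrightarrow>
     (\<Sum>i\<in>S. \<nu> i * R i) + \<beta> \<bullet> (\<Sum>i\<in>S. \<nu> i *\<^sub>R i) - rate_I S U \<nu> \<le> tilt_lam \<beta>"
  using DV_le_lam[of \<nu> "\<lambda>i. R i + \<beta> \<bullet> i"] sum_tilted_rate[of \<nu> \<beta>] by simp

lemma tilt_lam_subgradient: "tilt_lam \<beta> + (\<beta>' - \<beta>) \<bullet> tilt_mean \<beta> \<le> tilt_lam \<beta>'"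
  using DV_tilt_anc_eq_tilt_lam[of \<beta>] DV_le_tilt_lam[OF ancestral_in_prob_vecs[of "\<lambda>i. R i + \<beta> \<bullet> i"], of \<beta>']
  by (simp add: inner_diff_left)

lemma norm_tilt_mean_le: "norm (tilt_mean \<beta>) \<le> (\<Sum>i\<in>S. norm i)"
proof -
  have "norm (tilt_mean \<beta>) \<le> (\<Sum>i\<in>S. norm (tilt_anc \<beta> i *\<^sub>R i))" by (rule norm_sum)
  also have "\<dots> \<le> (\<Sum>i\<in>S. norm i)"
  proof (rule sum_mono)
    fix i assume "i \<in> S"
    hence "0 \<le> tilt_anc \<beta> i" "tilt_anc \<beta> i \<le> 1"
      using prob_vecs_bounds[OF finite ancestral_in_prob_vecs] by auto
    thus "norm (tilt_anc \<beta> i *\<^sub>R i) \<le> norm i" by (simp add: mult_left_le_one_le)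
  qed
  finally show ?thesis .
qed

lemma tilt_lam_lipschitz: "\<bar>tilt_lam \<beta>' - tilt_lam \<beta>\<bar> \<le> (\<Sum>i\<in>S. norm i) * norm (\<beta>' - \<beta>)"
proof -
  have bound: "\<bar>x \<bullet> tilt_mean b\<bar> \<le> (\<Sum>i\<in>S. norm i) * norm x" for x b
    using Cauchy_Schwarz_ineq2[of x "tilt_mean b"] mult_left_mono[OF norm_tilt_mean_le norm_ge_zero, of x b]
    by (simp add: mult.commute)
  have "\<bar>(\<beta> - \<beta>') \<bullet> tilt_mean \<beta>'\<bar> \<le> (\<Sum>i\<in>S. norm i) * norm (\<beta>' - \<beta>)"
    using bound[of "\<beta> - \<beta>'" \<beta>'] by (simp add: norm_minus_commute)
  thus ?thesis
    using bound[of "\<beta>' - \<beta>" \<beta>] tilt_lam_subgradient[of \<beta> \<beta>'] tilt_lam_subgradient[of \<beta>' \<beta>]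
    by linarith
qed

lemma tilt_lam_tendsto:
  assumes "X \<longlonglongrightarrow> \<beta>"
  shows "(\<lambda>n. tilt_lam (X n)) \<longlonglongrightarrow> tilt_lam \<beta>"
proof -
  have "(\<lambda>n. tilt_lam (X n) - tilt_lam \<beta>) \<longlonglongrightarrow> 0"
  proof (rule Lim_null_comparison)
    show "\<forall>\<^sub>F n in sequentially. norm (tilt_lam (X n) - tilt_lam \<beta>) \<le> (\<Sum>i\<in>S. norm i) * norm (X n - \<beta>)"
      using tilt_lam_lipschitz by simp
    have "(\<lambda>n. norm (X n - \<beta>)) \<longlonglongrightarrow> 0" using assms by (simp add: LIM_zero tendsto_norm_zero)
    thus "(\<lambda>n. (\<Sum>i\<in>S. norm i) * norm (X n - \<beta>)) \<longlonglongrightarrow> 0"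
      using tendsto_mult_left[of _ 0 _ "\<Sum>i\<in>S. norm i"] by fastforce
  qed
  thus ?thesis by (simp add: LIM_zero_iff)
qed

text \<open>A limit point of the ancestral distributions inherits the Donsker--Varadhan equality
  at \<open>\<beta>\<close>, so it is the unique maximiser there.\<close>

lemma tilt_anc_limit_point:
  assumes Y: "Y \<longlonglongrightarrow> \<beta>" and L: "\<forall>i\<in>S. (\<lambda>n. tilt_anc (Y n) i) \<longlonglongrightarrow> L i"
  shows "\<forall>i\<in>S. L i = tilt_anc \<beta> i"
proof -
  define \<nu> where "\<nu> = (\<lambda>i. if i \<in> S then L i else 0)"
  have L0: "L i \<ge> 0" if "i \<in> S" for i
    by (rule LIMSEQ_le_const[OF L[rule_format, OF that]])
      (use prob_vecs_bounds[OF finite ancestral_in_prob_vecs that] in auto)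
  have "(\<lambda>n. \<Sum>i\<in>S. tilt_anc (Y n) i) \<longlonglongrightarrow> (\<Sum>i\<in>S. L i)" by (rule tendsto_sum) (use L in auto)
  moreover have "(\<lambda>n. \<Sum>i\<in>S. tilt_anc (Y n) i) = (\<lambda>n. 1)"
    using ancestral_in_prob_vecs unfolding prob_vecs_def by auto
  ultimately have "(\<Sum>i\<in>S. L i) = 1" using LIMSEQ_unique[OF _ tendsto_const] by force
  hence \<nu>_prob: "\<nu> \<in> prob_vecs S" unfolding prob_vecs_def \<nu>_def using L0 by auto
  have "rate_I S U \<nu> \<le> (\<Sum>i\<in>S. \<nu> i * (R i + \<beta> \<bullet> i)) - tilt_lam \<beta>"
  proof (rule rate_I_le)
    fix v :: "'v \<Rightarrow> real" assume vpos: "\<forall>i\<in>S. v i > 0"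
    define ratio where "ratio = (\<lambda>\<mu>. - (\<Sum>i\<in>S. \<mu> i * (\<Sum>j\<in>S. U i j * v j) / v i))"
    have "(\<lambda>n. (\<Sum>i\<in>S. tilt_anc (Y n) i * (R i + Y n \<bullet> i)) - tilt_lam (Y n))
        \<longlonglongrightarrow> (\<Sum>i\<in>S. \<nu> i * (R i + \<beta> \<bullet> i)) - tilt_lam \<beta>"
      unfolding \<nu>_def by (intro tendsto_intros tilt_lam_tendsto Y) (use L in auto)
    moreover have "(\<lambda>n. ratio (tilt_anc (Y n))) \<longlonglongrightarrow> ratio \<nu>"
      unfolding ratio_def \<nu>_def by (intro tendsto_intros) (use L vpos in auto)
    moreover have "ratio (tilt_anc (Y n)) \<le> (\<Sum>i\<in>S. tilt_anc (Y n) i * (R i + Y n \<bullet> i)) - tilt_lam (Y n)" for n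
      using weighted_ratio_le_rate_I[OF finite generator ancestral_in_prob_vecs[of "\<lambda>i. R i + Y n \<bullet> i"] vpos]
        DV_ancestral_eq_lam[of "\<lambda>i. R i + Y n \<bullet> i"] unfolding ratio_def by simp
    ultimately show "ratio \<nu> \<le> (\<Sum>i\<in>S. \<nu> i * (R i + \<beta> \<bullet> i)) - tilt_lam \<beta>"
      by (intro LIMSEQ_le) auto
  qed
  hence "\<nu> = tilt_anc \<beta>" by (intro DV_maximizer_eq_ancestral[OF \<nu>_prob]) simp
  hence "\<forall>i\<in>S. \<nu> i = tilt_anc \<beta> i" by simp
  thus ?thesis unfolding \<nu>_def by simp
qed

lemma tilt_anc_tendsto:
  assumes X: "X \<longlonglongrightarrow> \<beta>" and k: "k \<in> S"
  shows "(\<lambda>n. tilt_anc (X n) k) \<longlonglongrightarrow> tilt_anc \<beta> k"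
proof (rule ccontr)
  assume "\<not> (\<lambda>n. tilt_anc (X n) k) \<longlonglongrightarrow> tilt_anc \<beta> k"
  then obtain \<epsilon> where "\<epsilon> > 0" and frequently: "\<forall>N. \<exists>n\<ge>N. \<epsilon> \<le> \<bar>tilt_anc (X n) k - tilt_anc \<beta> k\<bar>"
    unfolding LIMSEQ_iff by (auto simp: not_less)
  define I where "I = {n. \<epsilon> \<le> \<bar>tilt_anc (X n) k - tilt_anc \<beta> k\<bar>}"
  have "infinite I" unfolding infinite_nat_iff_unbounded_le I_def using frequently by blast
  then obtain r :: "nat \<Rightarrow> nat" where r: "strict_mono r" "\<And>n. r n \<in> I"
    using infinite_enumerate by blast
  have "\<bar>tilt_anc (X (r n)) i\<bar> \<le> 1" if "i \<in> S" for n i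
    using prob_vecs_bounds[OF finite ancestral_in_prob_vecs that] by auto
  then obtain s L where s: "strict_mono s" and L: "\<forall>i\<in>S. (\<lambda>n. tilt_anc (X (r (s n))) i) \<longlonglongrightarrow> L i"
    using finite_set_Bolzano_Weierstrass[OF finite, where f = "\<lambda>n i. tilt_anc (X (r n)) i" and B = "\<lambda>_. 1"]
    by blast
  have "(\<lambda>n. X (r (s n))) \<longlonglongrightarrow> \<beta>"
    using LIMSEQ_subseq_LIMSEQ[OF LIMSEQ_subseq_LIMSEQ[OF X r(1)] s] by (simp add: o_def)
  hence "(\<lambda>n. tilt_anc (X (r (s n))) k) \<longlonglongrightarrow> tilt_anc \<beta> k"
    using tilt_anc_limit_point[OF _ L] L k by auto
  then obtain N where "\<forall>n\<ge>N. \<bar>tilt_anc (X (r (s n))) k - tilt_anc \<beta> k\<bar> < \<epsilon>"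
    using \<open>\<epsilon> > 0\<close> unfolding LIMSEQ_iff by auto
  moreover have "r (s N) \<in> I" using r by auto
  ultimately show False unfolding I_def by force
qed

lemma isCont_tilt_mean: "isCont (\<lambda>\<beta>. tilt_mean \<beta>) \<beta>"
proof (rule continuous_at_sequentiallyI)
  fix X assume "X \<longlonglongrightarrow> \<beta>"
  thus "(\<lambda>n. tilt_mean (X n)) \<longlonglongrightarrow> tilt_mean \<beta>"
    by (intro tendsto_sum tendsto_scaleR tendsto_const tilt_anc_tendsto)
qed

text \<open>By the subgradient inequality the error term lies between \<open>0\<close> and
  \<open>h \<bullet> (tilt_mean (\<beta> + h) - tilt_mean \<beta>)\<close>, which is \<open>o(norm h)\<close> by continuity.\<close>

lemma tilt_lam_has_derivative:
  "((\<lambda>\<beta>. tilt_lam \<beta>) has_derivative (\<lambda>h. h \<bullet> tilt_mean \<beta>)) (at \<beta>)"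
  unfolding has_derivative_at
proof
  show "bounded_linear (\<lambda>h. h \<bullet> tilt_mean \<beta>)" by (rule bounded_linear_inner_left)
  let ?err = "\<lambda>h. tilt_lam (\<beta> + h) - tilt_lam \<beta> - h \<bullet> tilt_mean \<beta>"
  show "(\<lambda>h. norm (?err h) / norm h) \<midarrow>0\<rightarrow> 0"
  proof (rule Lim_null_comparison)
    show "\<forall>\<^sub>F h in at 0. norm (norm (?err h) / norm h) \<le> norm (tilt_mean (\<beta> + h) - tilt_mean \<beta>)"
    proof (rule always_eventually, rule allI)
      fix h :: 'v
      have "0 \<le> ?err h" using tilt_lam_subgradient[of \<beta> "\<beta> + h"] by simp
      moreover have "?err h \<le> h \<bullet> (tilt_mean (\<beta> + h) - tilt_mean \<beta>)"
        using tilt_lam_subgradient[of "\<beta> + h" \<beta>] by (simp add: inner_diff_right)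
      moreover have "\<dots> \<le> norm h * norm (tilt_mean (\<beta> + h) - tilt_mean \<beta>)"
        using Cauchy_Schwarz_ineq2[of h "tilt_mean (\<beta> + h) - tilt_mean \<beta>"] by linarith
      ultimately have "norm (?err h) \<le> norm h * norm (tilt_mean (\<beta> + h) - tilt_mean \<beta>)" by simp
      thus "norm (norm (?err h) / norm h) \<le> norm (tilt_mean (\<beta> + h) - tilt_mean \<beta>)"
        by (cases "h = 0") (simp_all add: divide_le_eq mult.commute)
    qed
    have "(\<lambda>h. tilt_mean (\<beta> + h)) \<midarrow>0\<rightarrow> tilt_mean \<beta>"
      using isCont_tilt_mean[of \<beta>] by (simp add: isCont_iff)
    thus "(\<lambda>h. norm (tilt_mean (\<beta> + h) - tilt_mean \<beta>)) \<midarrow>0\<rightarrow> 0"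
      by (simp add: LIM_zero tendsto_norm_zero)
  qed
qed

end

section \<open>Duality\<close>

lemma convex_hull_finite_prob_vecs:
  assumes "finite S" "y \<in> convex hull S"
  obtains \<nu> where "\<nu> \<in> prob_vecs S" "(\<Sum>i\<in>S. \<nu> i *\<^sub>R i) = y"
proof -
  obtain u where u: "\<forall>x\<in>S. 0 \<le> u x" "sum u S = 1" "(\<Sum>x\<in>S. u x *\<^sub>R x) = y"
    using assms convex_hull_finite[OF assms(1)] by auto
  define \<nu> where "\<nu> = (\<lambda>i. if i \<in> S then u i else 0)"
  have "\<nu> \<in> prob_vecs S" "(\<Sum>i\<in>S. \<nu> i *\<^sub>R i) = y" unfolding prob_vecs_def \<nu>_def using u by auto
  thus ?thesis by (rule that)
qed

lemma prob_vecs_mean_in_convex_hull: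
  "finite S \<Longrightarrow> \<nu> \<in> prob_vecs S \<Longrightarrow> (\<Sum>i\<in>S. \<nu> i *\<^sub>R i) \<in> convex hull S"
  unfolding convex_hull_finite prob_vecs_def by auto

lemma DV_le_bigLambda:
  assumes "finite S" "markov_generator S U" "\<nu> \<in> prob_vecs S"
  shows "(\<Sum>i\<in>S. \<nu> i * R i) - rate_I S U \<nu> \<le> bigLambda S U R (\<Sum>i\<in>S. \<nu> i *\<^sub>R i)"
  unfolding bigLambda_def
proof (rule cSup_upper)
  show "(\<Sum>i\<in>S. \<nu> i * R i) - rate_I S U \<nu> \<in> {(\<Sum>i\<in>S. \<mu> i * R i) - rate_I S U \<mu> |\<mu>.
      \<mu> \<in> prob_vecs S \<and> (\<Sum>i\<in>S. \<mu> i *\<^sub>R i) = (\<Sum>i\<in>S. \<nu> i *\<^sub>R i)}"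
    using assms(3) by blast
  have "(\<Sum>i\<in>S. \<mu> i * R i) - rate_I S U \<mu> \<le> (\<Sum>i\<in>S. \<bar>R i\<bar>)" if \<mu>: "\<mu> \<in> prob_vecs S" for \<mu>
  proof -
    have "\<mu> i * R i \<le> \<bar>R i\<bar>" if "i \<in> S" for i
    proof -
      have "0 \<le> \<mu> i" "\<mu> i \<le> 1" using prob_vecs_bounds[OF assms(1) \<mu> that] by auto
      hence "\<mu> i * R i \<le> \<mu> i * \<bar>R i\<bar>" by (intro mult_left_mono) auto
      also have "\<dots> \<le> \<bar>R i\<bar>" using \<open>0 \<le> \<mu> i\<close> \<open>\<mu> i \<le> 1\<close> by (intro mult_left_le_one_le) auto
      finally show ?thesis .
    qed
    hence "(\<Sum>i\<in>S. \<mu> i * R i) \<le> (\<Sum>i\<in>S. \<bar>R i\<bar>)" by (rule sum_mono)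
    thus ?thesis using rate_I_nonneg[OF assms(1,2) \<mu>] by simp
  qed
  thus "bdd_above {(\<Sum>i\<in>S. \<mu> i * R i) - rate_I S U \<mu> |\<mu>.
      \<mu> \<in> prob_vecs S \<and> (\<Sum>i\<in>S. \<mu> i *\<^sub>R i) = (\<Sum>i\<in>S. \<nu> i *\<^sub>R i)}"
    by (intro bdd_aboveI[of _ "\<Sum>i\<in>S. \<bar>R i\<bar>"]) blast
qed

lemma rint_conv_span_nonpos_imp_0:
  assumes "finite S" and z: "z \<in> rint_conv S" and u: "u \<in> span ((\<lambda>i. i - z) ` S)"
    and nonpos: "\<forall>i\<in>S. u \<bullet> (i - z) \<le> 0"
  shows "u = 0"
proof -
  obtain \<nu> where \<nu>: "\<nu> \<in> prob_vecs S" and \<nu>pos: "\<forall>i\<in>S. \<nu> i > 0" and zdef: "z = (\<Sum>i\<in>S. \<nu> i *\<^sub>R i)"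
    using z unfolding rint_conv_def by blast
  \<comment> \<open>\<open>z\<close> is a strictly positive average of the \<open>i\<close>, so the nonpositive numbers
    \<open>u \<bullet> (i - z)\<close> average to zero.\<close>
  have "(\<Sum>i\<in>S. \<nu> i * (u \<bullet> (i - z))) = u \<bullet> (\<Sum>i\<in>S. \<nu> i *\<^sub>R i) - (\<Sum>i\<in>S. \<nu> i) * (u \<bullet> z)"
    by (simp add: inner_diff_right inner_sum_right right_diff_distrib sum_subtractf sum_distrib_right)
  also have "\<dots> = 0" using \<nu> zdef unfolding prob_vecs_def by simp
  finally have "(\<Sum>i\<in>S. - (\<nu> i * (u \<bullet> (i - z)))) = 0" by (simp add: sum_negf)
  moreover have "\<forall>i\<in>S. 0 \<le> - (\<nu> i * (u \<bullet> (i - z)))"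
    using nonpos \<nu>pos by (simp add: mult_nonneg_nonpos less_imp_le)
  ultimately have "\<forall>i\<in>S. - (\<nu> i * (u \<bullet> (i - z))) = 0"
    using sum_nonneg_eq_0_iff[OF assms(1), of "\<lambda>i. - (\<nu> i * (u \<bullet> (i - z)))"] by blast
  hence "\<forall>i\<in>S. u \<bullet> (i - z) = 0" using \<nu>pos by fastforce
  hence "real_inner_class.orthogonal u u"
    by (intro orthogonal_to_span[OF u]) (auto simp: real_inner_class.orthogonal_def)
  thus ?thesis by (simp add: real_inner_class.orthogonal_def)
qed

lemma rint_conv_sphere_ascent:
  fixes S :: "'a::euclidean_space set"
  assumes fin: "finite S" and z: "z \<in> rint_conv S"
  obtains \<delta> where "\<delta> > 0"
    "\<And>w. w \<in> span ((\<lambda>i. i - z) ` S) \<Longrightarrow> norm w = 1 \<Longrightarrow> \<exists>i\<in>S. \<delta> \<le> w \<bullet> (i - z)"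
proof -
  define K where "K = span ((\<lambda>i. i - z) ` S) \<inter> sphere 0 1"
  show ?thesis
  proof (cases "K = {}")
    case True
    show ?thesis
    proof (rule that[of 1])
      fix w assume "w \<in> span ((\<lambda>i. i - z) ` S)" "norm w = 1"
      hence "w \<in> K" unfolding K_def by simp
      thus "\<exists>i\<in>S. 1 \<le> w \<bullet> (i - z)" using True by simp
    qed simp
  next
    case False
    have "S \<noteq> {}" using z unfolding rint_conv_def prob_vecs_def by auto
    \<comment> \<open>\<open>\<psi>\<close> is positive on \<open>K\<close>, so one of its \<open>card S\<close> terms exceeds \<open>min\<^sub>K \<psi> / card S\<close>.\<close>
    define \<psi> where "\<psi> = (\<lambda>w. \<Sum>i\<in>S. max 0 (w \<bullet> (i - z)))"
    have "compact K" unfolding K_def by (intro closed_Int_compact closed_span compact_sphere)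
    moreover have "continuous_on K \<psi>" unfolding \<psi>_def by (intro continuous_intros)
    ultimately obtain w0 where w0: "w0 \<in> K" and w0_min: "\<forall>w\<in>K. \<psi> w0 \<le> \<psi> w"
      using continuous_attains_inf[OF _ False] by blast
    have "w0 \<noteq> 0" using w0 unfolding K_def by auto
    hence "\<not> (\<forall>i\<in>S. w0 \<bullet> (i - z) \<le> 0)"
      using rint_conv_span_nonpos_imp_0[OF fin z, of w0] w0 unfolding K_def by blast
    then obtain i where "i \<in> S" "0 < max 0 (w0 \<bullet> (i - z))" by (auto simp: not_le)
    hence "\<psi> w0 > 0" unfolding \<psi>_def using fin by (intro sum_pos2[where i = i]) auto
    define \<delta> where "\<delta> = \<psi> w0 / real (card S)"
    have card: "real (card S) > 0" using fin \<open>S \<noteq> {}\<close> by (simp add: card_gt_0_iff)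
    hence "\<delta> > 0" using \<open>\<psi> w0 > 0\<close> unfolding \<delta>_def by simp
    have "\<exists>i\<in>S. \<delta> \<le> w \<bullet> (i - z)" if "w \<in> K" for w
    proof (rule ccontr)
      assume "\<not> (\<exists>i\<in>S. \<delta> \<le> w \<bullet> (i - z))"
      hence "\<psi> w < (\<Sum>i\<in>S. \<delta>)"
        unfolding \<psi>_def using \<open>\<delta> > 0\<close> by (intro sum_strict_mono) (use fin \<open>S \<noteq> {}\<close> in auto)
      also have "\<dots> = \<psi> w0" using card unfolding \<delta>_def by simp
      finally show False using w0_min that by auto
    qed
    hence "\<exists>i\<in>S. \<delta> \<le> w \<bullet> (i - z)" if "w \<in> span ((\<lambda>i. i - z) ` S)" "norm w = 1" for w
      using that unfolding K_def by simp
    thus ?thesis by (rule that[OF \<open>\<delta> > 0\<close>])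
  qed
qed

lemma rint_conv_coercive:
  fixes S :: "'a::euclidean_space set"
  assumes fin: "finite S" and z: "z \<in> rint_conv S"
  obtains \<delta> where "\<delta> > 0" "\<And>u. u \<in> span ((\<lambda>i. i - z) ` S) \<Longrightarrow> \<exists>i\<in>S. \<delta> * norm u \<le> u \<bullet> (i - z)"
proof (rule rint_conv_sphere_ascent[OF fin z])
  fix \<delta> :: real assume "\<delta> > 0" and ascent: "\<And>w. w \<in> span ((\<lambda>i. i - z) ` S) \<Longrightarrow> norm w = 1 \<Longrightarrow>
      \<exists>i\<in>S. \<delta> \<le> w \<bullet> (i - z)"
  have "S \<noteq> {}" using z unfolding rint_conv_def prob_vecs_def by auto
  have "\<exists>i\<in>S. \<delta> * norm u \<le> u \<bullet> (i - z)" if u: "u \<in> span ((\<lambda>i. i - z) ` S)" for u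
  proof (cases "u = 0")
    case True thus ?thesis using \<open>S \<noteq> {}\<close> by auto
  next
    case False
    have "u /\<^sub>R norm u \<in> span ((\<lambda>i. i - z) ` S)" using u by (rule span_mul)
    moreover have "norm (u /\<^sub>R norm u) = 1" using False by simp
    ultimately obtain i where "i \<in> S" "\<delta> \<le> (u /\<^sub>R norm u) \<bullet> (i - z)" using ascent by blast
    hence "norm u * \<delta> \<le> norm u * ((u /\<^sub>R norm u) \<bullet> (i - z))" by (simp add: mult_left_mono)
    also have "\<dots> = u \<bullet> (i - z)" using False by simp
    finally show ?thesis using \<open>i \<in> S\<close> by (auto simp: mult.commute)
  qed
  thus ?thesis by (rule that[OF \<open>\<delta> > 0\<close>])
qed

lemma continuous_coercive_attains_inf:
  fixes g :: "'a::{real_normed_vector, heine_borel} \<Rightarrow> real"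
  assumes "closed V" "0 \<in> V" and cont: "continuous_on V g" and "\<delta> > 0"
    and coercive: "\<And>u. u \<in> V \<Longrightarrow> C + \<delta> * norm u \<le> g u"
  obtains b where "b \<in> V" "\<And>u. u \<in> V \<Longrightarrow> g b \<le> g u"
proof -
  define r where "r = (g 0 - C) / \<delta>"
  have "r \<ge> 0" using coercive[OF \<open>0 \<in> V\<close>] \<open>\<delta> > 0\<close> unfolding r_def by simp
  define K where "K = V \<inter> cball 0 r"
  have "compact K" unfolding K_def using \<open>closed V\<close> by (intro closed_Int_compact compact_cball)
  moreover have "0 \<in> K" unfolding K_def using \<open>0 \<in> V\<close> \<open>r \<ge> 0\<close> by simp
  moreover have "continuous_on K g" unfolding K_def by (rule continuous_on_subset[OF cont]) auto
  ultimately obtain b where b: "b \<in> K" and b_min: "\<And>u. u \<in> K \<Longrightarrow> g b \<le> g u"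
    using continuous_attains_inf[of K g] by blast
  have "g b \<le> g u" if u: "u \<in> V" for u
  proof (cases "norm u \<le> r")
    case True thus ?thesis using b_min u unfolding K_def by auto
  next
    case False
    have "g b \<le> g 0" using b_min \<open>0 \<in> K\<close> by blast
    also have "\<dots> = C + \<delta> * r" unfolding r_def using \<open>\<delta> > 0\<close> by simp
    also have "\<dots> \<le> C + \<delta> * norm u" using False \<open>\<delta> > 0\<close> by simp
    also have "\<dots> \<le> g u" by (rule coercive[OF u])
    finally show ?thesis .
  qed
  moreover have "b \<in> V" using b unfolding K_def by simp
  ultimately show ?thesis using that by blast
qed

context tilted_generator
begin

lemma bigLambda_le_tilt_lam:
  assumes "y \<in> convex hull S"
  shows "bigLambda S U R y \<le> tilt_lam \<beta> - \<beta> \<bullet> y"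
  unfolding bigLambda_def
proof (rule cSup_least)
  obtain \<nu> where "\<nu> \<in> prob_vecs S" "(\<Sum>i\<in>S. \<nu> i *\<^sub>R i) = y"
    using convex_hull_finite_prob_vecs[OF finite assms] by blast
  thus "{(\<Sum>i\<in>S. \<nu> i * R i) - rate_I S U \<nu> |\<nu>. \<nu> \<in> prob_vecs S \<and> (\<Sum>i\<in>S. \<nu> i *\<^sub>R i) = y} \<noteq> {}"
    by blast
next
  fix x assume "x \<in> {(\<Sum>i\<in>S. \<nu> i * R i) - rate_I S U \<nu> |\<nu>. \<nu> \<in> prob_vecs S \<and> (\<Sum>i\<in>S. \<nu> i *\<^sub>R i) = y}"
  then obtain \<nu> where "\<nu> \<in> prob_vecs S" "(\<Sum>i\<in>S. \<nu> i *\<^sub>R i) = y" "x = (\<Sum>i\<in>S. \<nu> i * R i) - rate_I S U \<nu>"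
    by blast
  thus "x \<le> tilt_lam \<beta> - \<beta> \<bullet> y" using DV_le_tilt_lam[of \<nu> \<beta>] by simp
qed

lemma diag_le_tilt_lam: "i \<in> S \<Longrightarrow> R i + U i i + \<beta> \<bullet> i \<le> tilt_lam \<beta>"
  using irreducible_metzler.diag_le_perron_root[OF irreducible_metzler_plus_diag, of i "\<lambda>i. R i + \<beta> \<bullet> i"]
  unfolding lam_eq_perron_root plus_diag_def by simp

lemma tilt_lam_translate:
  assumes "\<forall>i\<in>S. u \<bullet> (i - z) = 0"
  shows "tilt_lam (\<beta> + u) - (\<beta> + u) \<bullet> z = tilt_lam \<beta> - \<beta> \<bullet> z"
proof -
  have "\<forall>i\<in>S. R i + (\<beta> + u) \<bullet> i = R i + \<beta> \<bullet> i + u \<bullet> z"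
    using assms by (simp add: inner_diff_right inner_add_left)
  hence "tilt_lam (\<beta> + u) = tilt_lam \<beta> + u \<bullet> z" by (rule lam_add_const)
  thus ?thesis by (simp add: inner_add_left)
qed

lemma tilt_mean_eq_if_minimizer:
  assumes "\<forall>b. tilt_lam \<beta> - \<beta> \<bullet> z \<le> tilt_lam b - b \<bullet> z"
  shows "tilt_mean \<beta> = z"
proof -
  have "((\<lambda>b. tilt_lam b - b \<bullet> z) has_derivative (\<lambda>h. h \<bullet> tilt_mean \<beta> - h \<bullet> z)) (at \<beta>)"
    by (intro has_derivative_diff tilt_lam_has_derivative
        bounded_linear.has_derivative[OF bounded_linear_inner_left has_derivative_ident])
  hence "(\<lambda>h. h \<bullet> tilt_mean \<beta> - h \<bullet> z) = (\<lambda>h. 0)"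
    by (rule differential_zero_maxmin[of \<beta> UNIV, rotated 2]) (use assms in auto)
  hence "(tilt_mean \<beta> - z) \<bullet> tilt_mean \<beta> - (tilt_mean \<beta> - z) \<bullet> z = 0" by metis
  hence "(tilt_mean \<beta> - z) \<bullet> (tilt_mean \<beta> - z) = 0" by (simp add: inner_diff_right)
  thus ?thesis by simp
qed

text \<open>The dual function \<open>\<beta> \<mapsto> tilt_lam \<beta> - \<beta> \<bullet> z\<close> is invariant under translations
  orthogonal to the affine hull of \<open>S\<close>, and coercive along it when \<open>z\<close> lies in the relative interior.\<close>

lemma tilt_dual_attains_min:
  assumes z: "z \<in> rint_conv S"
  obtains \<beta> where "\<forall>b. tilt_lam \<beta> - \<beta> \<bullet> z \<le> tilt_lam b - b \<bullet> z"
proof -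
  define V where "V = span ((\<lambda>i. i - z) ` S)"
  define g where "g = (\<lambda>b. tilt_lam b - b \<bullet> z)"
  have "continuous (at b) (\<lambda>b. tilt_lam b)" for b
    by (rule has_derivative_continuous[OF tilt_lam_has_derivative])
  hence cont: "continuous_on V g"
    unfolding g_def by (intro continuous_at_imp_continuous_on ballI continuous_intros) auto
  obtain \<delta> where "\<delta> > 0" and ascent: "\<And>u. u \<in> V \<Longrightarrow> \<exists>i\<in>S. \<delta> * norm u \<le> u \<bullet> (i - z)"
    using rint_conv_coercive[OF finite z] unfolding V_def by blast
  define C where "C = (\<Sum>i\<in>S. \<bar>R i + U i i\<bar>)"
  have coercive: "- C + \<delta> * norm u \<le> g u" if u: "u \<in> V" for u
  proof -
    obtain i where i: "i \<in> S" "\<delta> * norm u \<le> u \<bullet> (i - z)" using ascent[OF u] by blast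
    have "\<bar>R i + U i i\<bar> \<le> C" unfolding C_def by (rule member_le_sum) (use i finite in auto)
    thus ?thesis using diag_le_tilt_lam[OF i(1), of u] i(2) unfolding g_def by (simp add: inner_diff_right)
  qed
  have "closed V" "0 \<in> V" unfolding V_def by (simp_all add: span_zero)
  then obtain b where "b \<in> V" and b_min: "\<And>u. u \<in> V \<Longrightarrow> g b \<le> g u"
    using continuous_coercive_attains_inf[OF _ _ cont \<open>\<delta> > 0\<close> coercive] by blast
  have "g b \<le> g \<beta>" for \<beta>
  proof -
    obtain y u where y: "y \<in> V" and u: "\<And>w. w \<in> V \<Longrightarrow> real_inner_class.orthogonal u w"
      and "\<beta> = y + u"
      using orthogonal_subspace_decomp_exists[of "(\<lambda>i. i - z) ` S" \<beta>] unfolding V_def by blast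
    have "i - z \<in> V" if "i \<in> S" for i unfolding V_def using that by (simp add: span_base)
    hence "\<forall>i\<in>S. u \<bullet> (i - z) = 0" using u unfolding real_inner_class.orthogonal_def by blast
    hence "g \<beta> = g y" unfolding g_def \<open>\<beta> = y + u\<close> by (rule tilt_lam_translate)
    thus ?thesis using b_min[OF y] by simp
  qed
  thus ?thesis using that unfolding g_def by blast
qed

lemma tangent_slope_dual_eq:
  assumes z: "z \<in> convex hull S" and tangent: "tangent_slope S U R z \<beta>"
  shows "tilt_lam \<beta> - \<beta> \<bullet> z = bigLambda S U R z"
proof -
  have "tilt_lam \<beta> = (\<Sum>i\<in>S. tilt_anc \<beta> i * R i) - rate_I S U (tilt_anc \<beta>) + \<beta> \<bullet> tilt_mean \<beta>"
    using DV_tilt_anc_eq_tilt_lam[of \<beta>] by simp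
  also have "\<dots> \<le> bigLambda S U R (tilt_mean \<beta>) + \<beta> \<bullet> tilt_mean \<beta>"
    using DV_le_bigLambda[OF finite generator ancestral_in_prob_vecs[of "\<lambda>i. R i + \<beta> \<bullet> i"], of R]
    by simp
  also have "\<dots> \<le> bigLambda S U R z + \<beta> \<bullet> z"
  proof -
    have "tilt_mean \<beta> \<in> convex hull S"
      by (rule prob_vecs_mean_in_convex_hull[OF finite ancestral_in_prob_vecs])
    hence "bigLambda S U R (tilt_mean \<beta>) \<le> bigLambda S U R z - \<beta> \<bullet> (tilt_mean \<beta> - z)"
      using tangent unfolding tangent_slope_def by blast
    thus ?thesis by (simp add: inner_diff_right)
  qed
  finally show ?thesis using bigLambda_le_tilt_lam[OF z, of \<beta>] by simp
qed

lemma tangent_slope_tilt_mean: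
  assumes z: "z \<in> convex hull S" and tangent: "tangent_slope S U R z \<beta>"
  shows "tilt_mean \<beta> = z"
  using tangent_slope_dual_eq[OF assms] bigLambda_le_tilt_lam[OF z]
  by (intro tilt_mean_eq_if_minimizer) simp

lemma tangent_slope_if_tilt_mean_eq:
  assumes "tilt_mean \<beta> = z"
  shows "tangent_slope S U R z \<beta>"
  unfolding tangent_slope_def
proof
  fix y assume "y \<in> convex hull S"
  hence "bigLambda S U R y \<le> tilt_lam \<beta> - \<beta> \<bullet> y" by (rule bigLambda_le_tilt_lam)
  also have "\<dots> = (\<Sum>i\<in>S. tilt_anc \<beta> i * R i) - rate_I S U (tilt_anc \<beta>) - \<beta> \<bullet> (y - z)"
    using DV_tilt_anc_eq_tilt_lam[of \<beta>] assms by (simp add: inner_diff_right)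
  also have "\<dots> \<le> bigLambda S U R z - \<beta> \<bullet> (y - z)"
    using DV_le_bigLambda[OF finite generator ancestral_in_prob_vecs[of "\<lambda>i. R i + \<beta> \<bullet> i"], of R] assms
    by simp
  finally show "bigLambda S U R y \<le> bigLambda S U R z - \<beta> \<bullet> (y - z)" .
qed

lemma tangent_slopes_same_tilt_anc:
  assumes z: "z \<in> convex hull S"
    and tangent1: "tangent_slope S U R z \<beta>1" and tangent2: "tangent_slope S U R z \<beta>2"
  shows "tilt_anc \<beta>1 = tilt_anc \<beta>2"
proof -
  have "tilt_lam \<beta>1 = bigLambda S U R z + \<beta>1 \<bullet> z" using tangent_slope_dual_eq[OF z tangent1] by simp
  also have "\<dots> = (\<Sum>i\<in>S. tilt_anc \<beta>2 i * R i) - rate_I S U (tilt_anc \<beta>2) + \<beta>1 \<bullet> tilt_mean \<beta>2"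
    using tangent_slope_dual_eq[OF z tangent2] DV_tilt_anc_eq_tilt_lam[of \<beta>2]
      tangent_slope_tilt_mean[OF z tangent2] by simp
  also have "\<dots> = (\<Sum>i\<in>S. tilt_anc \<beta>2 i * (R i + \<beta>1 \<bullet> i)) - rate_I S U (tilt_anc \<beta>2)"
    using sum_tilted_rate by simp
  finally show ?thesis
    by (intro DV_maximizer_eq_ancestral[OF ancestral_in_prob_vecs, symmetric]) simp
qed

lemma tangent_slope_exists:
  assumes "z \<in> rint_conv S"
  shows "\<exists>\<beta>. tangent_slope S U R z \<beta>"
proof -
  obtain \<beta> where "\<forall>b. tilt_lam \<beta> - \<beta> \<bullet> z \<le> tilt_lam b - b \<bullet> z"
    using tilt_dual_attains_min[OF assms] by blast
  thus ?thesis by (intro exI tangent_slope_if_tilt_mean_eq tilt_mean_eq_if_minimizer)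
qed

lemma tangent_slope_INF_eq:
  assumes z: "z \<in> convex hull S" and tangent: "tangent_slope S U R z \<beta>"
  shows "(INF b. tilt_lam b - b \<bullet> z) = bigLambda S U R z"
proof (rule cInf_eq_minimum)
  show "bigLambda S U R z \<in> range (\<lambda>b. tilt_lam b - b \<bullet> z)"
    using tangent_slope_dual_eq[OF assms] by (intro range_eqI[of _ _ \<beta>]) simp
  show "\<And>x. x \<in> range (\<lambda>b. tilt_lam b - b \<bullet> z) \<Longrightarrow> bigLambda S U R z \<le> x"
    using bigLambda_le_tilt_lam[OF z] by blast
qed

end

theorem proposition3:
  fixes S :: "(real^'d) set" and U :: "real^'d \<Rightarrow> real^'d \<Rightarrow> real"
    and R :: "real^'d \<Rightarrow> real" and z :: "real^'d"
  assumes "finite S" and "markov_generator S U" and "irreducible_gen S U"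
    and "z \<in> rint_conv S"
  shows "(\<exists>\<beta>. tangent_slope S U R z \<beta>)
    \<and> (\<forall>\<beta>1 \<beta>2. tangent_slope S U R z \<beta>1 \<longrightarrow> tangent_slope S U R z \<beta>2 \<longrightarrow>
         ancestral S U (\<lambda>i. R i + \<beta>1 \<bullet> i) = ancestral S U (\<lambda>i. R i + \<beta>2 \<bullet> i))
    \<and> (\<forall>\<beta>z. tangent_slope S U R z \<beta>z \<longrightarrow>
         (let \<alpha> = ancestral S U (\<lambda>i. R i + \<beta>z \<bullet> i) in
           bigLambda S U R z = (INF \<beta>. lam S U (\<lambda>i. R i + \<beta> \<bullet> i) - \<beta> \<bullet> z)
         \<and> bigLambda S U R z = lam S U (\<lambda>i. R i + \<beta>z \<bullet> i) - \<beta>z \<bullet> z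
         \<and> bigLambda S U R z = (\<Sum>i\<in>S. \<alpha> i * R i) - rate_I S U \<alpha>
         \<and> ((\<lambda>\<beta>. lam S U (\<lambda>i. R i + \<beta> \<bullet> i)) has_derivative (\<lambda>h. h \<bullet> (\<Sum>i\<in>S. \<alpha> i *\<^sub>R i))) (at \<beta>z)
         \<and> (\<Sum>i\<in>S. \<alpha> i *\<^sub>R i) = z))
    \<and> (\<forall>\<beta>. (\<lambda>b. lam S U (\<lambda>i. R i + b \<bullet> i)) differentiable (at \<beta>))"
proof -
  obtain \<nu> where \<nu>: "\<nu> \<in> prob_vecs S" "z = (\<Sum>i\<in>S. \<nu> i *\<^sub>R i)"
    using assms(4) unfolding rint_conv_def by blast
  hence "S \<noteq> {}" unfolding prob_vecs_def by auto
  interpret tilted_generator S U R by unfold_locales (use assms \<open>S \<noteq> {}\<close> in auto)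
  have z: "z \<in> convex hull S" using prob_vecs_mean_in_convex_hull[OF assms(1) \<nu>(1)] \<nu>(2) by simp
  have "let \<alpha> = tilt_anc \<beta> in
        bigLambda S U R z = (INF b. tilt_lam b - b \<bullet> z)
      \<and> bigLambda S U R z = tilt_lam \<beta> - \<beta> \<bullet> z
      \<and> bigLambda S U R z = (\<Sum>i\<in>S. \<alpha> i * R i) - rate_I S U \<alpha>
      \<and> ((\<lambda>b. tilt_lam b) has_derivative (\<lambda>h. h \<bullet> (\<Sum>i\<in>S. \<alpha> i *\<^sub>R i))) (at \<beta>)
      \<and> (\<Sum>i\<in>S. \<alpha> i *\<^sub>R i) = z" if tangent: "tangent_slope S U R z \<beta>" for \<beta>
    using tangent_slope_INF_eq[OF z tangent] tangent_slope_dual_eq[OF z tangent]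
      tangent_slope_tilt_mean[OF z tangent] DV_tilt_anc_eq_tilt_lam[of \<beta>] tilt_lam_has_derivative[of \<beta>]
    unfolding Let_def by simp
  thus ?thesis
    using tangent_slope_exists[OF assms(4)] tangent_slopes_same_tilt_anc[OF z]
      differentiableI[OF tilt_lam_has_derivative]
    by blast
qed

end
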